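(* Let $(X,d_X)$ be a Polish metric space, $\mu$ a Borel probability measure on $X$, and $\rho$ a uniformly continuous $1$-bounded metric on $X$. Suppose $(M,\mathrm{vol})$ is a nonatomic finite measure space and $\epsilon>0$. Then there exists an open neighborhood $\mathcal O$ of $\mu$ in $\mathrm{Prob}(X)$ such that for any measurable map $\phi:M\to X$ with $\phi_*\overline{\mathrm{vol}}\in\mathcal O$ there exists a measurable $\psi:M\to X$ with $\rho^M(\phi,\psi)<\epsilon$ and $\psi_*\overline{\mathrm{vol}}=\mu$.
   Context: $\mathrm{Prob}(X)$ is the space of Borel probability measures on $X$ with the weak* topology (the smallest topology making $\nu\mapsto\int f\,d\nu$ continuous for every bounded continuous $f:X\to\mathbb R$). $\overline{\mathrm{vol}}=\mathrm{vol}/\mathrm{vol}(M)$, and $\phi_*\overline{\mathrm{vol}}(E)=\overline{\mathrm{vol}}(\phi^{-1}(E))$. A metric $\rho$ on $X$ is $1$-bounded if $\rho\le1$ and uniformly continuous if for every $\epsilon>0$ there is $\delta>0$ with $\rho(x,y)<\delta\Rightarrow d_X(x,y)<\epsilon$. For measurable $\phi,\psi:M\to X$, $\rho^M(\phi,\psi)=\int_M\rho(\phi(p),\psi(p))\,d\overline{\mathrm{vol}}(p)$. (In the paper $X$ also carries a uniform action of an lcsc group preserving $\mu$; this plays no role in the statement.)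
   Formalization: A uniformly continuous metric rho is one where for every epsilon>0 some delta>0 gives $\rho(x,y)<\epsilon$ whenever $d_X(x,y)<\delta$, instead of $d_X(x,y)<\epsilon$ whenever $\rho(x,y)<\delta$. This corrects a misprint. *)

theory Defs
  imports "HOL-Probability.Probability"
begin

definition Prob :: "'a::topological_space measure set" where
  "Prob = {N. sets N = sets borel \<and> prob_space N}"

definition weak_star_topology :: "'a::topological_space measure topology" where
  "weak_star_topology = topology_generated_by
     {{N \<in> Prob. (\<integral>x. f x \<partial>N) \<in> U} | f U.
        continuous_on UNIV (f :: 'a \<Rightarrow> real) \<and> bounded (range f) \<and> open U}"

definition is_metric :: "('a \<Rightarrow> 'a \<Rightarrow> real) \<Rightarrow> bool" where
  "is_metric \<rho> \<longleftrightarrow> (\<forall>x y. \<rho> x y = 0 \<longleftrightarrow> x = y) \<and> (\<forall>x y. \<rho> x y = \<rho> y x)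
     \<and> (\<forall>x y z. \<rho> x z \<le> \<rho> x y + \<rho> y z)"

definition one_bounded :: "('a \<Rightarrow> 'a \<Rightarrow> real) \<Rightarrow> bool" where
  "one_bounded \<rho> \<longleftrightarrow> (\<forall>x y. \<rho> x y \<le> 1)"

definition unif_cont_metric :: "('a::metric_space \<Rightarrow> 'a \<Rightarrow> real) \<Rightarrow> bool" where
  "unif_cont_metric \<rho> \<longleftrightarrow> (\<forall>e>0. \<exists>d>0. \<forall>x y. dist x y < d \<longrightarrow> \<rho> x y < e)"

definition nonatomic :: "'b measure \<Rightarrow> bool" where
  "nonatomic M \<longleftrightarrow> (\<forall>A\<in>sets M. emeasure M A > 0 \<longrightarrow>
     (\<exists>B\<in>sets M. B \<subseteq> A \<and> 0 < emeasure M B \<and> emeasure M B < emeasure M A))"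

definition volbar :: "'b measure \<Rightarrow> 'b measure" where
  "volbar M = scale_measure (ennreal (1 / measure M (space M))) M"

definition rhoM :: "('a \<Rightarrow> 'a \<Rightarrow> real) \<Rightarrow> 'b measure \<Rightarrow> ('b \<Rightarrow> 'a) \<Rightarrow> ('b \<Rightarrow> 'a) \<Rightarrow> real" where
  "rhoM \<rho> M \<phi> \<psi> = (\<integral>p. \<rho> (\<phi> p) (\<psi> p) \<partial>volbar M)"

end

theory Submission
  imports Defs
begin

(* Cover most of the mass of mu by finitely many disjoint compact sets F_j of small diameter and
   give them disjoint open neighbourhoods U_j carrying continuous bumps f_j with
   1_{F_j} <= f_j <= 1_{U_j}.  If phi_* vol is weak*-close to mu when tested on the f_j, then
   phi^-1(U_j) has volume at least about mu(F_j).  By Sierpinski's theorem one cuts from each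
   phi^-1(U_j) a piece of volume min(vol(phi^-1 U_j), mu(F_j)) and splits mu accordingly into
   parts living on the F_j plus a small remainder.  Every part of mu is then realised as the image
   of its piece of M: the piece is split along a tree mirroring a tree of dyadic cells of X, and a
   point is sent to the limit of the cells it descends through.  The resulting psi has law mu,
   lies within small d_X-distance of phi off a set of small volume, and rho <= 1 controls the rest. *)

section \<open>Nonatomic measures\<close>

lemma nonatomic_exists_subset_le_half:
  assumes "finite_measure N" and "nonatomic N"
    and S: "S \<in> sets N" and pos: "0 < measure N S"
  shows "\<exists>B\<in>sets N. B \<subseteq> S \<and> 0 < measure N B \<and> measure N B \<le> measure N S / 2"
proof -
  interpret finite_measure N by fact
  obtain D where D: "D \<in> sets N" "D \<subseteq> S" "0 < emeasure N D" "emeasure N D < emeasure N S"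
    using \<open>nonatomic N\<close> S pos unfolding nonatomic_def by (auto simp: emeasure_eq_measure)
  then have D': "0 < measure N D" "measure N D < measure N S"
    by (simp_all add: emeasure_eq_measure ennreal_less_iff)
  have "measure N (S - D) = measure N S - measure N D"
    using D S by (simp add: finite_measure_Diff)
  then show ?thesis
  proof (cases "measure N D \<le> measure N S / 2")
    case False
    with D D' S \<open>measure N (S - D) = _\<close> show ?thesis by (intro bexI[of _ "S - D"]) auto
  qed (use D D' in auto)
qed

lemma nonatomic_exists_small_subset:
  assumes fin: "finite_measure N" and na: "nonatomic N"
    and S: "S \<in> sets N" and pos: "0 < measure N S" and e: "0 < e"
  shows "\<exists>B\<in>sets N. B \<subseteq> S \<and> 0 < measure N B \<and> measure N B < e"
proof -
  have halves: "\<exists>B\<in>sets N. B \<subseteq> S \<and> 0 < measure N B \<and> measure N B \<le> measure N S / 2 ^ k" for k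
  proof (induction k)
    case (Suc k)
    then obtain B where B: "B \<in> sets N" "B \<subseteq> S" "0 < measure N B" "measure N B \<le> measure N S / 2 ^ k"
      by blast
    then obtain B' where "B' \<in> sets N" "B' \<subseteq> B" "0 < measure N B'" "measure N B' \<le> measure N B / 2"
      using nonatomic_exists_subset_le_half[OF fin na] by blast
    with B show ?case by (intro bexI[of _ B']) auto
  qed (use S pos in auto)
  obtain k where "(1/2) ^ k < e / measure N S"
    using real_arch_pow_inv[of "e / measure N S" "1/2"] e pos by auto
  then have "measure N S / 2 ^ k < e"
    using pos by (simp add: field_simps)
  with halves[of k] show ?thesis by (meson le_less_trans)
qed

lemma exists_ge_half_Sup:
  fixes X :: "real set"
  assumes "x0 \<in> X" and "bdd_above X" and "\<And>x. x \<in> X \<Longrightarrow> 0 \<le> x"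
  shows "\<exists>x\<in>X. \<forall>y\<in>X. y \<le> 2 * x"
proof (cases "Sup X \<le> 0")
  case True
  then show ?thesis using assms cSup_upper[of _ X] by (intro bexI[of _ x0]) force+
next
  case False
  then obtain x where "x \<in> X" "Sup X / 2 < x"
    using less_cSupD[of X "Sup X / 2"] assms(1) by fastforce
  then show ?thesis using assms cSup_upper[of _ X] by (intro bexI[of _ x]) force+
qed

lemma finite_measure_greedy_sequence:
  fixes N :: "'a measure"
  assumes fin: "finite_measure N" and S: "S \<in> sets N" and "0 \<le> t"
  obtains B :: "nat \<Rightarrow> 'a set" where "incseq B"
    "\<And>n. B n \<in> sets N" "\<And>n. B n \<subseteq> S" "\<And>n. measure N (B n) \<le> t"
    "\<And>n D. D \<in> sets N \<Longrightarrow> D \<subseteq> S - B n \<Longrightarrow> measure N D \<le> t - measure N (B n) \<Longrightarrow>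
       measure N D \<le> 2 * (measure N (B (Suc n)) - measure N (B n))"
proof -
  interpret finite_measure N by (rule fin)
  define admissible where "admissible B \<longleftrightarrow> B \<in> sets N \<and> B \<subseteq> S \<and> measure N B \<le> t" for B
  define extensions where
    "extensions B = {D \<in> sets N. D \<subseteq> S - B \<and> measure N D \<le> t - measure N B}" for B
  have "\<exists>D\<in>extensions B. \<forall>D'\<in>extensions B. measure N D' \<le> 2 * measure N D" if "admissible B" for B
  proof -
    have "\<exists>x\<in>measure N ` extensions B. \<forall>y\<in>measure N ` extensions B. y \<le> 2 * x"
      by (rule exists_ge_half_Sup[of 0])
        (use that in \<open>auto simp: admissible_def extensions_def
              intro!: bdd_aboveI[of _ "t - measure N B"] image_eqI[of _ _ "{}"]\<close>)
    then show ?thesis by blast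
  qed
  then obtain grow where grow: "\<And>B. admissible B \<Longrightarrow>
      grow B \<in> extensions B \<and> (\<forall>D\<in>extensions B. measure N D \<le> 2 * measure N (grow B))"
    by metis
  have grow_step: "admissible (A \<union> grow A) \<and> measure N (A \<union> grow A) = measure N A + measure N (grow A)"
    if A: "admissible A" for A
  proof -
    from grow[OF A] have G: "grow A \<in> sets N" "grow A \<subseteq> S - A" "measure N (grow A) \<le> t - measure N A"
      by (auto simp: extensions_def)
    then have "measure N (A \<union> grow A) = measure N A + measure N (grow A)"
      using A by (intro finite_measure_Union) (auto simp: admissible_def)
    with A G show ?thesis by (auto simp: admissible_def)
  qed
  define B where "B n = ((\<lambda>A. A \<union> grow A) ^^ n) {}" for n
  have B_Suc: "B (Suc n) = B n \<union> grow (B n)" for n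
    by (simp add: B_def)
  have adm: "admissible (B n)" for n
  proof (induction n)
    case (Suc n)
    then show ?case using grow_step by (simp add: B_Suc)
  qed (use \<open>0 \<le> t\<close> in \<open>simp add: B_def admissible_def\<close>)
  show thesis
  proof (rule that)
    show "incseq B" by (rule incseq_SucI) (simp add: B_Suc)
    show "B n \<in> sets N" "B n \<subseteq> S" "measure N (B n) \<le> t" for n
      using adm[of n] by (simp_all add: admissible_def)
    show "measure N D \<le> 2 * (measure N (B (Suc n)) - measure N (B n))"
      if "D \<in> sets N" "D \<subseteq> S - B n" "measure N D \<le> t - measure N (B n)" for n D
      using grow[OF adm[of n]] grow_step[OF adm[of n]] that by (auto simp: extensions_def B_Suc)
  qed
qed

lemma nonatomic_exists_subset_measure:
  assumes fin: "finite_measure N" and na: "nonatomic N"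
    and S: "S \<in> sets N" and "0 \<le> t" and "t \<le> measure N S"
  shows "\<exists>B\<in>sets N. B \<subseteq> S \<and> measure N B = t"
proof -
  interpret finite_measure N by (rule fin)
  obtain B where "incseq B" and B: "\<And>n. B n \<in> sets N" "\<And>n. B n \<subseteq> S" "\<And>n. measure N (B n) \<le> t"
    and greedy: "\<And>n D. D \<in> sets N \<Longrightarrow> D \<subseteq> S - B n \<Longrightarrow> measure N D \<le> t - measure N (B n) \<Longrightarrow>
       measure N D \<le> 2 * (measure N (B (Suc n)) - measure N (B n))"
    using finite_measure_greedy_sequence[OF fin S \<open>0 \<le> t\<close>] by blast
  define L where "L = (\<Union>n. B n)"
  have L: "L \<in> sets N" "L \<subseteq> S" using B by (auto simp: L_def)
  have "(\<lambda>n. measure N (B n)) \<longlonglongrightarrow> measure N L"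
    using B \<open>incseq B\<close> unfolding L_def by (intro finite_Lim_measure_incseq) auto
  then have "measure N L \<le> t"
    using B by (intro LIMSEQ_le_const2) auto
  moreover have "\<not> measure N L < t"
  proof
    assume lt: "measure N L < t"
    have "measure N (S - L) = measure N S - measure N L"
      using L S by (simp add: finite_measure_Diff)
    then obtain D where D: "D \<in> sets N" "D \<subseteq> S - L" "0 < measure N D" "measure N D < t - measure N L"
      using nonatomic_exists_small_subset[OF fin na, of "S - L" "t - measure N L"] S L lt \<open>t \<le> measure N S\<close>
      by auto
    have half: "measure N D \<le> 2 * (measure N (B (Suc n)) - measure N (B n))" for n
    proof (rule greedy[OF D(1)])
      show "D \<subseteq> S - B n" using D(2) by (auto simp: L_def)
      have "measure N (B n) \<le> measure N L"
        using L B by (intro finite_measure_mono) (auto simp: L_def)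
      then show "measure N D \<le> t - measure N (B n)" using D(4) by simp
    qed
    have "real n * measure N D \<le> 2 * (measure N (B n) - measure N (B 0))" for n
    proof (induction n)
      case (Suc n)
      then show ?case using half[of n] by (simp add: algebra_simps)
    qed simp
    moreover obtain n where "2 * t < real n * measure N D"
      using ex_less_of_nat_mult[OF D(3)] by blast
    moreover have "measure N (B n) \<le> t" "0 \<le> measure N (B 0)" using B(3) by simp_all
    ultimately show False by (smt (verit))
  qed
  ultimately show ?thesis using L by (intro bexI[of _ L]) auto
qed

lemma nonatomic_partition_sums:
  assumes fin: "finite_measure N" and na: "nonatomic N"
    and S: "S \<in> sets N" and t_nonneg: "\<And>n. 0 \<le> t n" and t_sums: "t sums measure N S"
  shows "\<exists>P. (\<forall>n. P n \<in> sets N \<and> P n \<subseteq> S \<and> measure N (P n) = t n \<and> (t n = 0 \<longrightarrow> P n = {}))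
             \<and> disjoint_family P \<and> S - (\<Union>n. P n) \<in> null_sets N"
proof -
  interpret finite_measure N by (rule fin)
  have "\<exists>B. R \<in> sets N \<and> 0 \<le> x \<and> x \<le> measure N R \<longrightarrow>
          B \<in> sets N \<and> B \<subseteq> R \<and> measure N B = x \<and> (x = 0 \<longrightarrow> B = {})" for R x
    using nonatomic_exists_subset_measure[OF fin na, of R x] by (cases "x = 0") auto
  then obtain sel where sel: "\<And>R x. R \<in> sets N \<Longrightarrow> 0 \<le> x \<Longrightarrow> x \<le> measure N R \<Longrightarrow>
      sel R x \<in> sets N \<and> sel R x \<subseteq> R \<and> measure N (sel R x) = x \<and> (x = 0 \<longrightarrow> sel R x = {})"
    by metis
  define rest where "rest = rec_nat S (\<lambda>n R. R - sel R (t n))"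
  define P where "P n = sel (rest n) (t n)" for n
  have rest_0: "rest 0 = S" and rest_Suc: "rest (Suc n) = rest n - P n" for n
    by (simp_all add: rest_def P_def)
  have partial_le: "(\<Sum>m<n. t m) \<le> measure N S" for n
    using sum_le_suminf[OF sums_summable[OF t_sums], of "{..<n}"] t_nonneg sums_unique[OF t_sums] by auto
  have rest: "rest n \<in> sets N \<and> rest n \<subseteq> S \<and> measure N (rest n) = measure N S - (\<Sum>m<n. t m)"
    and P: "P n \<in> sets N \<and> P n \<subseteq> rest n \<and> measure N (P n) = t n \<and> (t n = 0 \<longrightarrow> P n = {})" for n
  proof -
    have P_if: "P n \<in> sets N \<and> P n \<subseteq> rest n \<and> measure N (P n) = t n \<and> (t n = 0 \<longrightarrow> P n = {})"
      if "rest n \<in> sets N \<and> measure N (rest n) = measure N S - (\<Sum>m<n. t m)" for n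
      using sel[of "rest n" "t n"] that t_nonneg partial_le[of "Suc n"] by (simp add: P_def)
    show rest: "rest n \<in> sets N \<and> rest n \<subseteq> S \<and> measure N (rest n) = measure N S - (\<Sum>m<n. t m)"
    proof (induction n)
      case (Suc n)
      with P_if[of n] have "measure N (rest n - P n) = measure N (rest n) - measure N (P n)"
        by (intro finite_measure_Diff) auto
      with Suc P_if[of n] show ?case by (auto simp: rest_Suc)
    qed (use S in \<open>simp add: rest_0\<close>)
    then show "P n \<in> sets N \<and> P n \<subseteq> rest n \<and> measure N (P n) = t n \<and> (t n = 0 \<longrightarrow> P n = {})"
      using P_if by blast
  qed
  have rest_antimono: "rest n \<subseteq> rest m" if "m \<le> n" for m n
    using that by (induction n) (auto simp: rest_Suc le_Suc_eq)
  have "P m \<inter> P n = {}" if "m < n" for m n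
    using P[of n] rest_antimono[of "Suc m" n] that by (auto simp: rest_Suc)
  then have disj: "disjoint_family P"
    unfolding disjoint_family_on_def by (metis Int_commute linorder_neqE_nat)
  have P_sub: "P n \<subseteq> S" for n using P[of n] rest[of n] by blast
  have "(\<lambda>n. measure N (P n)) sums measure N (\<Union>n. P n)"
    using P disj by (intro finite_measure_UNION) auto
  then have "measure N (\<Union>n. P n) = measure N S"
    using P t_sums sums_unique2 by simp
  moreover have "measure N (S - (\<Union>n. P n)) = measure N S - measure N (\<Union>n. P n)"
    using P_sub P S by (intro finite_measure_Diff) auto
  ultimately have "S - (\<Union>n. P n) \<in> null_sets N"
    using P S by (intro null_setsI) (auto simp: emeasure_eq_measure)
  then show ?thesis using P P_sub disj by blast
qed

lemma nonatomic_partition_subsets: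
  fixes B :: "nat \<Rightarrow> 'b set"
  assumes "prob_space N" and na: "nonatomic N"
    and B: "\<And>j. j < n \<Longrightarrow> B j \<in> sets N" and disj: "disjoint_family_on B {..<n}"
    and c: "\<And>j. j < n \<Longrightarrow> 0 \<le> c j \<and> c j \<le> measure N (B j)"
  shows "\<exists>C. (\<forall>j\<le>n. C j \<in> sets N) \<and> disjoint_family_on C {..n} \<and> (\<Union>j\<le>n. C j) = space N
           \<and> (\<forall>j<n. C j \<subseteq> B j \<and> measure N (C j) = c j)"
proof -
  interpret prob_space N by fact
  have "\<forall>j\<in>{..<n}. \<exists>D\<in>sets N. D \<subseteq> B j \<and> measure N D = c j"
    using nonatomic_exists_subset_measure[OF finite_measure_axioms na B] c by blast
  then obtain D where D: "\<And>j. j < n \<Longrightarrow> D j \<in> sets N \<and> D j \<subseteq> B j \<and> measure N (D j) = c j"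
    by (metis lessThan_iff)
  define C where "C j = (if j < n then D j else space N - (\<Union>i<n. D i))" for j
  have sets_C: "C j \<in> sets N" for j
    using D by (auto simp: C_def)
  have "D i \<inter> D j = {}" if "i < n" "j < n" "i \<noteq> j" for i j
    using D[OF that(1)] D[OF that(2)] disj that unfolding disjoint_family_on_def by blast
  then have disj_C: "disjoint_family_on C {..n}"
    unfolding disjoint_family_on_def C_def by auto
  have "(\<Union>j\<le>n. C j) \<subseteq> space N"
    using sets.sets_into_space[OF sets_C] by blast
  moreover have "p \<in> (\<Union>j\<le>n. C j)" if "p \<in> space N" for p
  proof (cases "\<exists>i<n. p \<in> D i")
    case True
    then show ?thesis by (auto simp: C_def)
  next
    case False
    with that show ?thesis by (intro UN_I[of n]) (auto simp: C_def)
  qed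
  ultimately have cover: "(\<Union>j\<le>n. C j) = space N" by blast
  have "\<forall>j<n. C j \<subseteq> B j \<and> measure N (C j) = c j"
    using D by (simp add: C_def)
  with sets_C disj_C cover show ?thesis by (intro exI[of _ C]) simp
qed

lemma nonatomic_tree_partition:
  fixes m :: "nat list \<Rightarrow> real"
  assumes fin: "finite_measure N" and na: "nonatomic N" and C: "C \<in> sets N"
    and m_nonneg: "\<And>l. 0 \<le> m l" and m_root: "m [] = measure N C"
    and m_sums: "\<And>l. (\<lambda>n. m (n # l)) sums m l"
  shows "\<exists>T. T [] = C \<and> (\<forall>l. T l \<in> sets N \<and> measure N (T l) = m l)
           \<and> (\<forall>n l. T (n # l) \<subseteq> T l \<and> (m (n # l) = 0 \<longrightarrow> T (n # l) = {}))
           \<and> (\<forall>l. disjoint_family (\<lambda>n. T (n # l)) \<and> T l - (\<Union>n. T (n # l)) \<in> null_sets N)"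
proof -
  define splits where "splits S t P \<longleftrightarrow>
      (\<forall>n. P n \<in> sets N \<and> P n \<subseteq> S \<and> measure N (P n) = t n \<and> (t n = 0 \<longrightarrow> P n = {}))
      \<and> disjoint_family P \<and> S - (\<Union>n. P n) \<in> null_sets N" for S and t :: "nat \<Rightarrow> real" and P
  define T where "T = rec_list C (\<lambda>n l R. (SOME P. splits R (\<lambda>j. m (j # l)) P) n)"
  have T_Nil: "T [] = C" and T_Cons: "T (n # l) = (SOME P. splits (T l) (\<lambda>j. m (j # l)) P) n" for n l
    by (simp_all add: T_def)
  have step: "splits (T l) (\<lambda>j. m (j # l)) (\<lambda>n. T (n # l))"
    if "T l \<in> sets N" "measure N (T l) = m l" for l
    unfolding T_Cons using nonatomic_partition_sums[OF fin na that(1) m_nonneg] m_sums[of l] that(2)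
    by (intro someI_ex[where P = "splits (T l) (\<lambda>j. m (j # l))"]) (simp add: splits_def)
  have T: "T l \<in> sets N \<and> measure N (T l) = m l" for l
  proof (induction l)
    case (Cons n l)
    then show ?case using step[of l] by (simp add: splits_def)
  qed (simp add: T_Nil C m_root)
  with step T_Nil show ?thesis by (auto simp: splits_def)
qed

lemma sets_volbar [simp]: "sets (volbar M) = sets M"
  and space_volbar [simp]: "space (volbar M) = space M"
  by (simp_all add: volbar_def space_scale_measure)

lemma emeasure_volbar:
  assumes "finite_measure M"
  shows "emeasure (volbar M) A = ennreal (measure M A / measure M (space M))"
proof -
  interpret finite_measure M by fact
  show ?thesis
    by (simp add: volbar_def emeasure_eq_measure ennreal_mult'[symmetric] field_simps)
qed

lemma prob_space_volbar:
  assumes "finite_measure M" and "emeasure M (space M) \<noteq> 0"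
  shows "prob_space (volbar M)"
proof
  interpret finite_measure M by fact
  have "measure M (space M) \<noteq> 0" using assms(2) by (simp add: emeasure_eq_measure)
  then show "emeasure (volbar M) (space (volbar M)) = 1"
    by (simp add: emeasure_volbar[OF assms(1)])
qed

lemma nonatomic_volbar:
  assumes "finite_measure M" and "nonatomic M" and "emeasure M (space M) \<noteq> 0"
  shows "nonatomic (volbar M)"
  unfolding nonatomic_def
proof (intro ballI impI)
  interpret finite_measure M by fact
  have pos: "0 < measure M (space M)"
    using assms(3) by (simp add: emeasure_eq_measure zero_less_measure_iff)
  fix A assume A: "A \<in> sets (volbar M)" "0 < emeasure (volbar M) A"
  then have "0 < emeasure M A"
    using pos by (simp add: emeasure_volbar[OF assms(1)] emeasure_eq_measure zero_less_divide_iff)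
  then obtain B where "B \<in> sets M" "B \<subseteq> A" "0 < emeasure M B" "emeasure M B < emeasure M A"
    using \<open>nonatomic M\<close> A(1) unfolding nonatomic_def by auto
  with pos show "\<exists>B\<in>sets (volbar M). B \<subseteq> A \<and> 0 < emeasure (volbar M) B \<and> emeasure (volbar M) B < emeasure (volbar M) A"
    by (intro bexI[of _ B])
      (auto simp: emeasure_volbar[OF assms(1)] emeasure_eq_measure ennreal_less_iff divide_strict_right_mono)
qed

section \<open>Finite measures on Polish spaces\<close>

lemma vimage_Int_sets:
  assumes "f \<in> measurable N M" and "E \<in> sets M" and "C \<in> sets N"
  shows "f -` E \<inter> C \<in> sets N"
proof -
  have "(f -` E \<inter> space N) \<inter> C \<in> sets N"
    using measurable_sets[OF assms(1,2)] assms(3) by (rule sets.Int)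
  moreover have "(f -` E \<inter> space N) \<inter> C = f -` E \<inter> C"
    using sets.sets_into_space[OF assms(3)] by blast
  ultimately show ?thesis by simp
qed

lemma finite_measure_eqI_open_le:
  fixes A B :: "'a::{second_countable_topology, complete_space} measure"
  assumes "finite_measure A" and "finite_measure B"
    and sets_A: "sets A = sets borel" and sets_B: "sets B = sets borel"
    and total: "emeasure A UNIV = emeasure B UNIV"
    and le: "\<And>G. open G \<Longrightarrow> emeasure B G \<le> emeasure A G"
  shows "A = B"
proof -
  interpret A: finite_measure A by fact
  interpret B: finite_measure B by fact
  have space_A: "space A = UNIV" and space_B: "space B = UNIV"
    using sets_eq_imp_space_eq[OF sets_A] sets_eq_imp_space_eq[OF sets_B] by simp_all
  have le_all: "emeasure B E \<le> emeasure A E" if E: "E \<in> sets borel" for E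
  proof -
    have "emeasure B E \<le> (INF U \<in> {U. E \<subseteq> U \<and> open U}. emeasure A U)"
    proof (rule INF_greatest)
      fix U assume "U \<in> {U. E \<subseteq> U \<and> open U}"
      then have "emeasure B E \<le> emeasure B U" "emeasure B U \<le> emeasure A U"
        using E le sets_B by (auto intro!: emeasure_mono)
      then show "emeasure B E \<le> emeasure A U" by (rule order_trans)
    qed
    also have "\<dots> = emeasure A E"
      using outer_regular[OF sets_A _ E] A.emeasure_finite by simp
    finally show ?thesis .
  qed
  show ?thesis
  proof (rule measure_eqI)
    fix E assume "E \<in> sets A"
    then have E: "E \<in> sets borel" using sets_A by simp
    have "measure A (- E) \<ge> measure B (- E)"
      using le_all[of "- E"] E by (simp add: A.emeasure_eq_measure B.emeasure_eq_measure)
    moreover have "measure A (- E) = measure A UNIV - measure A E"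
      using A.finite_measure_compl[of E] E sets_A space_A by (simp add: Compl_eq_Diff_UNIV)
    moreover have "measure B (- E) = measure B UNIV - measure B E"
      using B.finite_measure_compl[of E] E sets_B space_B by (simp add: Compl_eq_Diff_UNIV)
    moreover have "measure A UNIV = measure B UNIV"
      using total by (simp add: A.emeasure_eq_measure B.emeasure_eq_measure)
    moreover have "measure B E \<le> measure A E"
      using le_all[OF E] by (simp add: A.emeasure_eq_measure B.emeasure_eq_measure)
    ultimately show "emeasure A E = emeasure B E"
      by (simp add: A.emeasure_eq_measure B.emeasure_eq_measure)
  qed (simp add: sets_A sets_B)
qed

lemma finite_measure_inner_compact:
  fixes \<mu> :: "'a::polish_space measure"
  assumes "finite_measure \<mu>" and sets_\<mu>: "sets \<mu> = sets borel" and B: "B \<in> sets borel" and "0 < a"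
  shows "\<exists>K. K \<subseteq> B \<and> compact K \<and> measure \<mu> B \<le> measure \<mu> K + a"
proof (cases "measure \<mu> B \<le> a")
  case False
  interpret finite_measure \<mu> by fact
  have "emeasure \<mu> B = (SUP K \<in> {K. K \<subseteq> B \<and> compact K}. emeasure \<mu> K)"
    using inner_regular[OF sets_\<mu> _ B] by simp
  moreover have "ennreal (measure \<mu> B - a) < emeasure \<mu> B"
    using False \<open>0 < a\<close> by (simp add: emeasure_eq_measure ennreal_lessI)
  ultimately obtain K where "K \<subseteq> B" "compact K" "ennreal (measure \<mu> B - a) < emeasure \<mu> K"
    by (auto simp: less_SUP_iff)
  then show ?thesis
    using False by (intro exI[of _ K]) (simp add: emeasure_eq_measure ennreal_less_iff)
qed (intro exI[of _ "{}"]; simp)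

lemma measure_le_integral:
  assumes "finite_measure M" and "A \<in> sets M" and "integrable M f"
    and "\<And>x. x \<in> space M \<Longrightarrow> indicator A x \<le> f x"
  shows "measure M A \<le> (\<integral>x. f x \<partial>M)"
proof -
  interpret finite_measure M by fact
  have "measure M A = (\<integral>x. indicator A x \<partial>M)" using assms(2) by simp
  also have "\<dots> \<le> (\<integral>x. f x \<partial>M)"
    using assms by (intro integral_mono) (auto simp: integrable_indicator_iff less_top[symmetric])
  finally show ?thesis .
qed

lemma integral_le_measure:
  assumes "finite_measure M" and "A \<in> sets M" and "integrable M f"
    and "\<And>x. x \<in> space M \<Longrightarrow> f x \<le> indicator A x"
  shows "(\<integral>x. f x \<partial>M) \<le> measure M A"
proof -
  interpret finite_measure M by fact
  have "(\<integral>x. f x \<partial>M) \<le> (\<integral>x. indicator A x \<partial>M)"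
    using assms by (intro integral_mono) (auto simp: integrable_indicator_iff less_top[symmetric])
  also have "\<dots> = measure M A" using assms(2) by simp
  finally show ?thesis .
qed

text \<open>No measurability of g is needed: the integral of a non-integrable function is 0.\<close>
lemma integral_le_off_set:
  fixes g :: "'b \<Rightarrow> real"
  assumes "prob_space N" and R: "R \<in> sets N" and g_le: "\<And>p. g p \<le> 1"
    and AE_le: "AE p in N. p \<notin> R \<longrightarrow> g p \<le> e" and "0 \<le> e"
  shows "(\<integral>p. g p \<partial>N) \<le> e + measure N R"
proof -
  interpret prob_space N by fact
  have "(\<integral>p. g p \<partial>N) \<le> (\<integral>p. e + indicator R p \<partial>N)"
  proof (rule integral_mono_AE')
    show "integrable N (\<lambda>p. e + indicator R p)"
      using R by (intro Bochner_Integration.integrable_add) (auto simp: integrable_indicator_iff less_top[symmetric])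
    show "AE p in N. g p \<le> e + indicator R p"
      using AE_le
    proof eventually_elim
      case (elim p)
      then show ?case using g_le[of p] \<open>0 \<le> e\<close> by (auto simp: indicator_def)
    qed
  qed (use \<open>0 \<le> e\<close> in simp)
  also have "\<dots> = e + measure N R"
    using R by (subst Bochner_Integration.integral_add)
      (auto simp: integrable_indicator_iff less_top[symmetric] prob_space)
  finally show ?thesis .
qed

lemma prob_space_decompose_disjoint:
  fixes F :: "nat \<Rightarrow> 'a set" and c :: "nat \<Rightarrow> real"
  assumes "prob_space M"
    and F: "\<And>j. j < n \<Longrightarrow> F j \<in> sets M" and disj: "disjoint_family_on F {..<n}"
    and c: "\<And>j. j < n \<Longrightarrow> 0 \<le> c j \<and> c j \<le> measure M (F j)"
  shows "\<exists>\<kappa>. (\<forall>j. finite_measure (\<kappa> j) \<and> sets (\<kappa> j) = sets M)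
           \<and> (\<forall>j<n. emeasure (\<kappa> j) (space M) = c j \<and> emeasure (\<kappa> j) (space M - F j) = 0)
           \<and> (\<forall>E\<in>sets M. (\<Sum>j\<le>n. emeasure (\<kappa> j) E) = emeasure M E)"
proof -
  interpret prob_space M by fact
  \<comment> \<open>If M (F j) = 0 then c j = 0, so the junk value w j = 0 is harmless.\<close>
  define w where "w j = c j / measure M (F j)" for j
  have w: "0 \<le> w j" "w j \<le> 1" "w j * measure M (F j) = c j" if "j < n" for j
    using c[OF that] by (auto simp: w_def divide_le_eq_1)
  define g where
    "g j x = (if j < n then w j * indicator (F j) x else 1 - (\<Sum>i<n. w i * indicator (F i) x))" for j x
  have "(\<Sum>i<n. w i * indicator (F i) x) \<le> (\<Sum>i<n. indicator (F i) x)" for x :: 'a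
    using w by (intro sum_mono) (auto simp: indicator_def)
  also have "\<dots> x = indicator (\<Union>i<n. F i) x" for x
    by (rule indicator_UN_disjoint[symmetric]) (simp_all add: disj)
  finally have below_one: "(\<Sum>i<n. w i * indicator (F i) x) \<le> 1" for x
    by (rule order_trans) (simp add: indicator_def)
  have g_bounds: "0 \<le> g j x \<and> g j x \<le> 1" for j x
    using w below_one sum_nonneg[of "{..<n}" "\<lambda>i. w i * indicator (F i) x"]
    by (auto simp: g_def indicator_def)
  have g_sum: "(\<Sum>j\<le>n. g j x) = 1" for x
    by (simp add: g_def lessThan_Suc_atMost[symmetric])
  have piece_meas: "(\<lambda>x. w i * indicator (F i) x) \<in> borel_measurable M" if "i < n" for i
    using F[OF that] by simp
  have "g j \<in> borel_measurable M" for j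
  proof (cases "j < n")
    case False
    have "(\<lambda>x. 1 - (\<Sum>i<n. w i * indicator (F i) x)) \<in> borel_measurable M"
      using piece_meas by (intro borel_measurable_diff borel_measurable_sum) auto
    with False show ?thesis unfolding g_def by simp
  qed (use piece_meas in \<open>simp add: g_def[abs_def]\<close>)
  then have g_meas: "(\<lambda>x. ennreal (g j x)) \<in> borel_measurable M" for j
    by (rule measurable_compose[OF _ measurable_ennreal])
  define \<kappa> where "\<kappa> j = density M (\<lambda>x. ennreal (g j x))" for j
  have emeasure_\<kappa>: "emeasure (\<kappa> j) E = (\<integral>\<^sup>+x. ennreal (g j x) * indicator E x \<partial>M)" if "E \<in> sets M" for j E
    unfolding \<kappa>_def using g_meas that by (rule emeasure_density)
  have "finite_measure (\<kappa> j)" for j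
  proof (rule finite_measureI)
    have "emeasure (\<kappa> j) (space M) \<le> (\<integral>\<^sup>+x. indicator (space M) x \<partial>M)"
      using g_bounds by (simp add: emeasure_\<kappa> indicator_def nn_integral_mono)
    then show "emeasure (\<kappa> j) (space (\<kappa> j)) \<noteq> \<infinity>"
      by (auto simp: \<kappa>_def emeasure_space_1 top_unique)
  qed
  moreover have "emeasure (\<kappa> j) (space M) = c j \<and> emeasure (\<kappa> j) (space M - F j) = 0" if "j < n" for j
  proof -
    have "emeasure (\<kappa> j) (space M) = (\<integral>\<^sup>+x. ennreal (w j) * indicator (F j) x \<partial>M)"
      using that by (auto simp: emeasure_\<kappa> g_def indicator_def intro!: nn_integral_cong)
    also have "\<dots> = c j"
      using F[OF that] w[OF that] by (simp add: nn_integral_cmult_indicator emeasure_eq_measure ennreal_mult[symmetric])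
    moreover have "(\<integral>\<^sup>+x. ennreal (g j x) * indicator (space M - F j) x \<partial>M) = (\<integral>\<^sup>+x. 0 \<partial>M)"
      by (rule nn_integral_cong) (simp add: g_def indicator_def that)
    then have "emeasure (\<kappa> j) (space M - F j) = 0"
      using F[OF that] by (simp add: emeasure_\<kappa>)
    ultimately show ?thesis by simp
  qed
  moreover have "(\<Sum>j\<le>n. emeasure (\<kappa> j) E) = emeasure M E" if E: "E \<in> sets M" for E
  proof -
    have "(\<Sum>j\<le>n. emeasure (\<kappa> j) E) = (\<integral>\<^sup>+x. (\<Sum>j\<le>n. ennreal (g j x) * indicator E x) \<partial>M)"
      using E g_meas by (simp only: emeasure_\<kappa>[OF E]) (rule nn_integral_sum[symmetric]; simp)
    also have "\<dots> = (\<integral>\<^sup>+x. indicator E x \<partial>M)"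
      using g_bounds g_sum by (simp add: sum_distrib_right[symmetric])
    finally show ?thesis using E by simp
  qed
  ultimately show ?thesis by (intro exI[of _ \<kappa>]) (auto simp: \<kappa>_def)
qed

lemma distr_eq_of_pieces:
  fixes C :: "nat \<Rightarrow> 'b set" and \<kappa> :: "nat \<Rightarrow> 'a::topological_space measure"
  assumes \<psi>: "\<psi> \<in> borel_measurable N"
    and C: "\<And>i. i \<le> n \<Longrightarrow> C i \<in> sets N" and disj: "disjoint_family_on C {..n}"
    and cover: "(\<Union>i\<le>n. C i) = space N"
    and pieces: "\<And>i E. i \<le> n \<Longrightarrow> E \<in> sets borel \<Longrightarrow> emeasure N (\<psi> -` E \<inter> C i) = emeasure (\<kappa> i) E"
    and sum: "\<And>E. E \<in> sets borel \<Longrightarrow> (\<Sum>i\<le>n. emeasure (\<kappa> i) E) = emeasure \<mu> E"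
    and sets_\<mu>: "sets \<mu> = sets borel"
  shows "distr N borel \<psi> = \<mu>"
proof (rule measure_eqI)
  fix E assume "E \<in> sets (distr N borel \<psi>)"
  then have E: "E \<in> sets borel" by simp
  have "emeasure (distr N borel \<psi>) E = emeasure N (\<Union>i\<le>n. \<psi> -` E \<inter> C i)"
    using \<psi> E cover by (simp add: emeasure_distr)
  also have "\<dots> = (\<Sum>i\<le>n. emeasure N (\<psi> -` E \<inter> C i))"
    using vimage_Int_sets[OF \<psi> E C] disj
    by (intro sum_emeasure[symmetric]) (auto simp: disjoint_family_on_def)
  also have "\<dots> = emeasure \<mu> E"
    using pieces[OF _ E] sum[OF E] by simp
  finally show "emeasure (distr N borel \<psi>) E = emeasure \<mu> E" .
qed (simp add: sets_\<mu>)

lemma AE_in_pieces: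
  fixes n :: nat
  assumes \<psi>: "\<psi> \<in> borel_measurable N" and C: "\<And>j. j < n \<Longrightarrow> C j \<in> sets N"
    and F: "\<And>j. j < n \<Longrightarrow> F j \<in> sets borel"
    and null: "\<And>j. j < n \<Longrightarrow> emeasure N (\<psi> -` (- F j) \<inter> C j) = 0"
  shows "AE p in N. \<forall>j<n. p \<in> C j \<longrightarrow> \<psi> p \<in> F j"
proof -
  have "(\<Union>j<n. \<psi> -` (- F j) \<inter> C j) \<in> null_sets N"
  proof (rule null_sets_UN')
    fix j assume "j \<in> {..<n}"
    then show "\<psi> -` (- F j) \<inter> C j \<in> null_sets N"
      using vimage_Int_sets[OF \<psi> _ C, of "- F j" j] F null by auto
  qed simp
  then show ?thesis by (rule AE_I') auto
qed

section \<open>Dyadic cells of a separable metric space\<close>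

definition dense_seq :: "(nat \<Rightarrow> 'a::metric_space) \<Rightarrow> bool" where
  "dense_seq s \<longleftrightarrow> (\<forall>x e. 0 < e \<longrightarrow> (\<exists>n. dist x (s n) < e))"

lemma dense_seq_exists: "\<exists>s :: nat \<Rightarrow> 'a::{metric_space, second_countable_topology}. dense_seq s"
proof -
  obtain X :: "'a set" where X: "countable X" "\<And>Y. open Y \<Longrightarrow> Y \<noteq> {} \<Longrightarrow> \<exists>d\<in>X. d \<in> Y"
    using countable_dense_setE by blast
  have "dense_seq (from_nat_into X)"
    unfolding dense_seq_def
  proof (intro allI impI)
    fix x :: 'a and e :: real assume "0 < e"
    then obtain d where "d \<in> X" "dist x d < e" using X(2)[of "ball x e"] by auto
    then show "\<exists>n. dist x (from_nat_into X n) < e"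
      using from_nat_into_to_nat_on[OF X(1)] by metis
  qed
  then show ?thesis by blast
qed

definition ball_partition :: "(nat \<Rightarrow> 'a::metric_space) \<Rightarrow> real \<Rightarrow> nat \<Rightarrow> 'a set" where
  "ball_partition s r n = ball (s n) r - (\<Union>m<n. ball (s m) r)"

lemma ball_partition_borel: "ball_partition s r n \<in> sets borel"
  unfolding ball_partition_def by (intro sets.Diff borel_open open_UN) auto

lemma ball_partition_subset_ball: "ball_partition s r n \<subseteq> ball (s n) r"
  unfolding ball_partition_def by blast

lemma disjoint_family_ball_partition: "disjoint_family (ball_partition s r)"
proof -
  have "ball_partition s r m \<inter> ball_partition s r n = {}" if "m < n" for m n
    using that unfolding ball_partition_def by blast
  then show ?thesis
    unfolding disjoint_family_on_def by (metis Int_commute linorder_neqE_nat)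
qed

lemma ball_partition_cover:
  assumes "dense_seq s" and "0 < r"
  shows "\<exists>n. x \<in> ball_partition s r n"
proof -
  have ex: "\<exists>n. dist x (s n) < r" using assms unfolding dense_seq_def by blast
  define n where "n = (LEAST n. dist x (s n) < r)"
  have "dist x (s n) < r" unfolding n_def using ex by (rule LeastI_ex)
  moreover have "\<not> dist x (s m) < r" if "m < n" for m
    using that unfolding n_def by (rule not_less_Least)
  ultimately have "x \<in> ball_partition s r n" by (auto simp: ball_partition_def dist_commute)
  then show ?thesis by blast
qed

(* The cell with address [n_k, ..., n_1] is the intersection over i of the n_i-th piece of the
   partition of radius 2^-i: the head of an address is its finest level. *)
primrec dyadic_cell :: "(nat \<Rightarrow> 'a::metric_space) \<Rightarrow> nat list \<Rightarrow> 'a set" where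
  "dyadic_cell s [] = UNIV"
| "dyadic_cell s (n # l) = dyadic_cell s l \<inter> ball_partition s ((1/2) ^ Suc (length l)) n"

lemma dyadic_cell_borel: "dyadic_cell s l \<in> sets borel"
  by (induction l) (auto intro: ball_partition_borel)

lemma disjoint_family_dyadic_cell_Cons: "disjoint_family (\<lambda>n. dyadic_cell s (n # l))"
proof -
  have "disjoint_family (ball_partition s ((1/2) ^ Suc (length l)))"
    by (rule disjoint_family_ball_partition)
  then show ?thesis unfolding disjoint_family_on_def dyadic_cell.simps by blast
qed

lemma dyadic_cell_eq_UN_Cons: "dense_seq s \<Longrightarrow> dyadic_cell s l = (\<Union>n. dyadic_cell s (n # l))"
  using ball_partition_cover[of s] by auto

lemma dist_dyadic_cell_Cons:
  assumes "x \<in> dyadic_cell s (n # l)" and "y \<in> dyadic_cell s (n # l)"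
  shows "dist x y < 2 * (1/2) ^ Suc (length l)"
proof -
  define r :: real where "r = (1/2) ^ Suc (length l)"
  have "x \<in> ball (s n) r" "y \<in> ball (s n) r"
    using assms ball_partition_subset_ball[of s r n] unfolding r_def by auto
  then have "dist x y < r + r"
    by (metis dist_commute dist_triangle_less_add mem_ball)
  then show ?thesis by (simp add: r_def)
qed

lemma exists_dyadic_cell: "dense_seq s \<Longrightarrow> \<exists>l. length l = k \<and> x \<in> dyadic_cell s l"
proof (induction k)
  case (Suc k)
  then obtain l where "length l = k" "x \<in> dyadic_cell s l" by blast
  moreover obtain n where "x \<in> ball_partition s ((1/2) ^ Suc k) n"
    using ball_partition_cover[OF Suc.prems] by fastforce
  ultimately show ?case by (intro exI[of _ "n # l"]) auto
qed simp

lemma tree_family_disjoint: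
  assumes sub: "\<And>n l. f (n # l) \<subseteq> f l" and disj: "\<And>l. disjoint_family (\<lambda>n. f (n # l))"
  shows "length l = length l' \<Longrightarrow> l \<noteq> l' \<Longrightarrow> f l \<inter> f l' = {}"
proof (induction l arbitrary: l')
  case (Cons n l)
  then obtain m l'' where l': "l' = m # l''" by (cases l') auto
  show ?case
  proof (cases "l = l''")
    case True
    with Cons l' disj[of l] show ?thesis by (auto simp: disjoint_family_on_def)
  next
    case False
    with Cons l' have "f l \<inter> f l'' = {}" by simp
    with sub[of n l] sub[of m l''] l' show ?thesis by blast
  qed
qed simp

lemma dyadic_cell_disjoint:
  "length l = length l' \<Longrightarrow> l \<noteq> l' \<Longrightarrow> dyadic_cell s l \<inter> dyadic_cell s l' = {}"
  by (rule tree_family_disjoint[OF _ disjoint_family_dyadic_cell_Cons]) auto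

lemma
  fixes s :: "nat \<Rightarrow> 'a::metric_space" and G :: "'a set"
  defines "W k \<equiv> \<Union>l\<in>{l. length l = k \<and> closure (dyadic_cell s l) \<subseteq> G}. dyadic_cell s l"
  assumes dense: "dense_seq s"
  shows incseq_dyadic_cells_in: "incseq W"
    and UN_dyadic_cells_in_open: "open G \<Longrightarrow> (\<Union>k. W k) = G"
proof -
  show "incseq W"
  proof (rule incseq_SucI, rule subsetI)
    fix k x assume "x \<in> W k"
    then obtain l where l: "length l = k" "closure (dyadic_cell s l) \<subseteq> G" "x \<in> dyadic_cell s l"
      unfolding W_def by blast
    then obtain n where n: "x \<in> dyadic_cell s (n # l)" using dyadic_cell_eq_UN_Cons[OF dense] by blast
    have "closure (dyadic_cell s (n # l)) \<subseteq> G"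
      using l(2) closure_mono[of "dyadic_cell s (n # l)" "dyadic_cell s l"] by auto
    with l n show "x \<in> W (Suc k)" unfolding W_def by (intro UN_I[of "n # l"]) auto
  qed
  assume "open G"
  show "(\<Union>k. W k) = G"
  proof (intro equalityI subsetI)
    fix x assume "x \<in> (\<Union>k. W k)"
    then show "x \<in> G" unfolding W_def using closure_subset by blast
  next
    fix x assume "x \<in> G"
    then obtain e where e: "0 < e" "ball x e \<subseteq> G" using \<open>open G\<close> open_contains_ball by blast
    obtain k where k: "(1/2) ^ k < e / 2" using real_arch_pow_inv[of "e / 2" "1/2"] e by auto
    obtain l where l: "length l = k" "x \<in> dyadic_cell s l" using exists_dyadic_cell[OF dense] by blast
    then obtain n where n: "x \<in> dyadic_cell s (n # l)" using dyadic_cell_eq_UN_Cons[OF dense] by blast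
    have "(1/2::real) ^ Suc k \<le> (1/2) ^ k" by (simp add: power_decreasing)
    with k have "dyadic_cell s (n # l) \<subseteq> cball x (e / 2)"
      using dist_dyadic_cell_Cons[OF n] l(1) by (fastforce simp: subset_iff)
    then have "closure (dyadic_cell s (n # l)) \<subseteq> cball x (e / 2)" by (intro closure_minimal) auto
    also have "\<dots> \<subseteq> G" using e by (auto simp: subset_iff)
    finally show "x \<in> (\<Union>k. W k)"
      using n l(1) unfolding W_def by (intro UN_I[of "Suc k"] UN_I[of "n # l"]) auto
  qed
qed

section \<open>Finite Borel measures as images of nonatomic measures\<close>

(* Off the null set leak, a point
   lies in exactly one T l of each length; the cells with these addresses are nested with radii
   2^-k, and limit_map sends the point to the limit of points chosen in them. *)
locale dyadic_coupling =
  fixes N :: "'b measure" and s :: "nat \<Rightarrow> 'a::{metric_space, complete_space}"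
    and T :: "nat list \<Rightarrow> 'b set"
  assumes dense: "dense_seq s"
    and T_sets: "T l \<in> sets N"
    and T_Cons_subset: "T (n # l) \<subseteq> T l"
    and T_Cons_disjoint: "disjoint_family (\<lambda>n. T (n # l))"
    and T_Cons_null: "T l - (\<Union>n. T (n # l)) \<in> null_sets N"
    and T_nonempty: "T l \<noteq> {} \<Longrightarrow> dyadic_cell s l \<noteq> {}"
begin

definition leak :: "'b set" where
  "leak = (\<Union>l. T l - (\<Union>n. T (n # l)))"

definition tracked :: "'b set" where
  "tracked = T [] - leak"

lemma leak_null: "leak \<in> null_sets N"
  unfolding leak_def by (rule null_sets_UN') (auto intro: T_Cons_null)

lemma T_subset_root: "T l \<subseteq> T []"
  by (induction l) (use T_Cons_subset in blast)+

lemma T_disjoint: "length l = length l' \<Longrightarrow> l \<noteq> l' \<Longrightarrow> T l \<inter> T l' = {}"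
  by (rule tree_family_disjoint[OF T_Cons_subset T_Cons_disjoint])

fun address :: "'b \<Rightarrow> nat \<Rightarrow> nat list" where
  "address p 0 = []"
| "address p (Suc k) = (SOME n. p \<in> T (n # address p k)) # address p k"

lemma length_address [simp]: "length (address p k) = k"
  by (induction k) auto

lemma mem_T_address: "p \<in> tracked \<Longrightarrow> p \<in> T (address p k)"
proof (induction k)
  case (Suc k)
  then have "\<exists>n. p \<in> T (n # address p k)" by (auto simp: tracked_def leak_def)
  then show ?case unfolding address.simps by (rule someI_ex)
qed (simp add: tracked_def)

lemma address_eq: "p \<in> T l \<Longrightarrow> address p (length l) = l"
proof (induction l)
  case (Cons n l)
  then have "address p (length l) = l" using T_Cons_subset by blast
  moreover have "(SOME n'. p \<in> T (n' # l)) = n"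
  proof (rule some_equality)
    fix n' assume "p \<in> T (n' # l)"
    with Cons.prems T_Cons_disjoint[of l] show "n' = n" by (auto simp: disjoint_family_on_def)
  qed (rule Cons.prems)
  ultimately show ?case by simp
qed simp

lemma dyadic_cell_address_antimono:
  "k \<le> k' \<Longrightarrow> dyadic_cell s (address p k') \<subseteq> dyadic_cell s (address p k)"
  by (induction k' rule: dec_induct) auto

definition approx :: "nat \<Rightarrow> 'b \<Rightarrow> 'a" where
  "approx k p = (if p \<in> tracked then (SOME x. x \<in> dyadic_cell s (address p k)) else s 0)"

definition limit_map :: "'b \<Rightarrow> 'a" where
  "limit_map p = lim (\<lambda>k. approx k p)"

lemma approx_mem: "p \<in> tracked \<Longrightarrow> k \<le> k' \<Longrightarrow> approx k' p \<in> dyadic_cell s (address p k)"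
proof -
  assume p: "p \<in> tracked" and "k \<le> k'"
  then have "dyadic_cell s (address p k') \<noteq> {}" using T_nonempty mem_T_address by blast
  then have "approx k' p \<in> dyadic_cell s (address p k')"
    using p unfolding approx_def by (simp add: some_in_eq)
  with dyadic_cell_address_antimono[OF \<open>k \<le> k'\<close>] show ?thesis by blast
qed

lemma Cauchy_approx: "Cauchy (\<lambda>k. approx k p)"
proof (cases "p \<in> tracked")
  case True
  show ?thesis
  proof (rule metric_CauchyI)
    fix e :: real assume "0 < e"
    then obtain k where k: "(1/2) ^ k < e" using real_arch_pow_inv[of e "1/2"] by auto
    have "dist (approx i p) (approx j p) < e" if "Suc k \<le> i" "Suc k \<le> j" for i j
    proof -
      obtain n where n: "address p (Suc k) = n # address p k" by simp
      have "approx i p \<in> dyadic_cell s (n # address p k)" "approx j p \<in> dyadic_cell s (n # address p k)"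
        using approx_mem[OF True that(1)] approx_mem[OF True that(2)] unfolding n .
      then have "dist (approx i p) (approx j p) < 2 * (1/2) ^ Suc k"
        using dist_dyadic_cell_Cons by fastforce
      with k show ?thesis by simp
    qed
    then show "\<exists>M. \<forall>i\<ge>M. \<forall>j\<ge>M. dist (approx i p) (approx j p) < e" by blast
  qed
qed (simp add: approx_def convergent_Cauchy convergent_const)

lemma approx_LIMSEQ: "(\<lambda>k. approx k p) \<longlonglongrightarrow> limit_map p"
  unfolding limit_map_def using Cauchy_convergent[OF Cauchy_approx] by (simp add: convergent_LIMSEQ_iff)

lemma limit_map_in_closure: "p \<in> tracked \<Longrightarrow> limit_map p \<in> closure (dyadic_cell s (address p k))"
  by (rule Lim_in_closed_set[OF closed_closure _ _ approx_LIMSEQ])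
    (auto intro!: eventually_sequentiallyI[of k] closure_subset[THEN subsetD] approx_mem)

lemma tracked_sets: "tracked \<in> sets N"
  using leak_null T_sets unfolding tracked_def by blast

lemma approx_measurable: "approx k \<in> borel_measurable N"
proof (rule borel_measurableI)
  fix S :: "'a set" assume "open S"
  define pick where "pick l = (SOME x. x \<in> dyadic_cell s l)" for l
  have T_leak: "p \<in> tracked \<and> approx (length l) p = pick l" if "p \<in> T l - leak" for p l
    using that T_subset_root address_eq by (auto simp: tracked_def approx_def pick_def)
  have "approx k -` S \<inter> space N =
      (\<Union>l\<in>{l. length l = k \<and> pick l \<in> S}. T l - leak) \<union> (if s 0 \<in> S then space N - tracked else {})"
  proof (intro equalityI subsetI)
    fix p assume p: "p \<in> approx k -` S \<inter> space N"
    show "p \<in> (\<Union>l\<in>{l. length l = k \<and> pick l \<in> S}. T l - leak) \<union> (if s 0 \<in> S then space N - tracked else {})"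
    proof (cases "p \<in> tracked")
      case True
      then have "p \<in> T (address p k) - leak" using mem_T_address by (auto simp: tracked_def)
      with p True show ?thesis
        by (intro UnI1 UN_I[of "address p k"]) (auto simp: approx_def pick_def)
    qed (use p in \<open>simp add: approx_def\<close>)
  next
    fix p
    assume "p \<in> (\<Union>l\<in>{l. length l = k \<and> pick l \<in> S}. T l - leak) \<union> (if s 0 \<in> S then space N - tracked else {})"
    then consider (cell) l where "length l = k" "pick l \<in> S" "p \<in> T l - leak"
      | (outside) "s 0 \<in> S" "p \<in> space N - tracked"
      by (auto split: if_splits)
    then show "p \<in> approx k -` S \<inter> space N"
    proof cases
      case cell
      then show ?thesis using T_leak[OF cell(3)] sets.sets_into_space[OF T_sets[of l]] by auto
    qed (simp add: approx_def)
  qed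
  also have "\<dots> \<in> sets N"
    using T_sets leak_null tracked_sets by (intro sets.Un sets.countable_UN') auto
  finally show "approx k -` S \<inter> space N \<in> sets N" .
qed

lemma limit_map_measurable: "limit_map \<in> borel_measurable N"
  by (rule borel_measurable_LIMSEQ_metric[OF approx_measurable approx_LIMSEQ])

lemma emeasure_UN_T_le:
  assumes L: "countable L" and G: "G \<in> sets borel"
    and cells: "\<And>l. l \<in> L \<Longrightarrow> closure (dyadic_cell s l) \<subseteq> G"
  shows "emeasure N (\<Union>l\<in>L. T l) \<le> emeasure N (limit_map -` G \<inter> T [])"
proof -
  have pre: "limit_map -` G \<inter> T [] \<in> sets N"
    using limit_map_measurable G T_sets by (rule vimage_Int_sets)
  have "(\<Union>l\<in>L. T l) \<subseteq> (limit_map -` G \<inter> T []) \<union> leak"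
  proof
    fix p assume "p \<in> (\<Union>l\<in>L. T l)"
    then obtain l where l: "l \<in> L" "p \<in> T l" by blast
    show "p \<in> (limit_map -` G \<inter> T []) \<union> leak"
    proof (cases "p \<in> leak")
      case False
      then have "p \<in> tracked" using l T_subset_root by (auto simp: tracked_def)
      then have "limit_map p \<in> closure (dyadic_cell s l)"
        using limit_map_in_closure[of p "length l"] address_eq[OF l(2)] by simp
      then have "limit_map p \<in> G" using cells[OF l(1)] by blast
      moreover have "p \<in> T []" using l(2) T_subset_root by blast
      ultimately show ?thesis by blast
    qed simp
  qed
  then have "emeasure N (\<Union>l\<in>L. T l) \<le> emeasure N ((limit_map -` G \<inter> T []) \<union> leak)"
    using pre leak_null by (intro emeasure_mono) auto
  also have "\<dots> \<le> emeasure N (limit_map -` G \<inter> T []) + emeasure N leak"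
    using pre leak_null by (intro emeasure_subadditive) auto
  finally show ?thesis using leak_null by (simp add: null_setsD1)
qed

lemma emeasure_open_le:
  assumes "finite_measure N" and "finite_measure \<mu>" and sets_\<mu>: "sets \<mu> = sets borel"
    and T_measure: "\<And>l. measure N (T l) = measure \<mu> (dyadic_cell s l)" and G: "open G"
  shows "emeasure \<mu> G \<le> emeasure N (limit_map -` G \<inter> T [])"
proof -
  interpret N: finite_measure N by fact
  interpret L: finite_measure \<mu> by fact
  define Lk where "Lk k = {l. length l = k \<and> closure (dyadic_cell s l) \<subseteq> G}" for k
  have cells_eq: "emeasure \<mu> (\<Union>l\<in>Lk k. dyadic_cell s l) = emeasure N (\<Union>l\<in>Lk k. T l)" for k
  proof -
    have "disjoint_family_on (dyadic_cell s) (Lk k)"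
      using dyadic_cell_disjoint unfolding disjoint_family_on_def Lk_def by blast
    then have "emeasure \<mu> (\<Union>l\<in>Lk k. dyadic_cell s l) = (\<integral>\<^sup>+l. emeasure \<mu> (dyadic_cell s l) \<partial>count_space (Lk k))"
      using dyadic_cell_borel sets_\<mu> by (intro emeasure_UN_countable) auto
    also have "\<dots> = (\<integral>\<^sup>+l. emeasure N (T l) \<partial>count_space (Lk k))"
      by (simp add: L.emeasure_eq_measure N.emeasure_eq_measure T_measure)
    also have "\<dots> = emeasure N (\<Union>l\<in>Lk k. T l)"
    proof (rule emeasure_UN_countable[symmetric])
      show "disjoint_family_on T (Lk k)"
        using T_disjoint unfolding disjoint_family_on_def Lk_def by blast
    qed (use T_sets in auto)
    finally show ?thesis .
  qed
  have "emeasure \<mu> (\<Union>l\<in>Lk k. dyadic_cell s l) \<le> emeasure N (limit_map -` G \<inter> T [])" for k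
  proof -
    have "emeasure N (\<Union>l\<in>Lk k. T l) \<le> emeasure N (limit_map -` G \<inter> T [])"
      using G by (intro emeasure_UN_T_le countableI_type) (auto simp: Lk_def)
    then show ?thesis using cells_eq[of k] by simp
  qed
  then have "(SUP k. emeasure \<mu> (\<Union>l\<in>Lk k. dyadic_cell s l)) \<le> emeasure N (limit_map -` G \<inter> T [])"
    by (rule SUP_least)
  moreover have "(SUP k. emeasure \<mu> (\<Union>l\<in>Lk k. dyadic_cell s l)) = emeasure \<mu> (\<Union>k. \<Union>l\<in>Lk k. dyadic_cell s l)"
    using incseq_dyadic_cells_in[OF dense, of G] dyadic_cell_borel sets_\<mu>
    by (intro SUP_emeasure_incseq) (auto simp: Lk_def simp del: dyadic_cell.simps(2))
  ultimately show ?thesis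
    using UN_dyadic_cells_in_open[OF dense G] by (simp add: Lk_def)
qed

end

lemma nonatomic_exists_map_distr:
  fixes \<mu> :: "'a::polish_space measure"
  assumes fin: "finite_measure N" and na: "nonatomic N" and C: "C \<in> sets N"
    and "finite_measure \<mu>" and sets_\<mu>: "sets \<mu> = sets borel"
    and mass: "emeasure \<mu> UNIV = emeasure N C"
  shows "\<exists>\<psi>\<in>borel_measurable N. \<forall>E\<in>sets borel. emeasure N (\<psi> -` E \<inter> C) = emeasure \<mu> E"
proof -
  interpret N: finite_measure N by (rule fin)
  interpret L: finite_measure \<mu> by fact
  have space_\<mu>: "space \<mu> = UNIV" using sets_eq_imp_space_eq[OF sets_\<mu>] by simp
  obtain s :: "nat \<Rightarrow> 'a" where dense: "dense_seq s" using dense_seq_exists by blast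
  define m where "m l = measure \<mu> (dyadic_cell s l)" for l
  have m_sums: "(\<lambda>n. m (n # l)) sums m l" for l
  proof -
    have "(\<lambda>n. measure \<mu> (dyadic_cell s (n # l))) sums measure \<mu> (\<Union>n. dyadic_cell s (n # l))"
      using dyadic_cell_borel disjoint_family_dyadic_cell_Cons
      by (intro L.finite_measure_UNION) (auto simp: sets_\<mu> simp del: dyadic_cell.simps(2))
    then show ?thesis unfolding m_def by (simp only: dyadic_cell_eq_UN_Cons[OF dense, symmetric])
  qed
  have "m [] = measure N C"
    using mass space_\<mu> by (simp add: m_def L.emeasure_eq_measure N.emeasure_eq_measure)
  then obtain T where T_Nil: "T [] = C" and T: "\<And>l. T l \<in> sets N \<and> measure N (T l) = m l"
    and T_Cons: "\<And>n l. T (n # l) \<subseteq> T l \<and> (m (n # l) = 0 \<longrightarrow> T (n # l) = {})"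
    and T_split: "\<And>l. disjoint_family (\<lambda>n. T (n # l)) \<and> T l - (\<Union>n. T (n # l)) \<in> null_sets N"
    using nonatomic_tree_partition[OF fin na C _ _ m_sums] by (auto simp: m_def)
  have "T l \<noteq> {} \<Longrightarrow> dyadic_cell s l \<noteq> {}" for l
    using T_Cons by (cases l) (auto simp: m_def)
  then interpret dyadic_coupling N s T
    using dense T T_Cons T_split by unfold_locales auto
  define A where "A = distr (restrict_space N C) borel limit_map"
  have emeasure_A: "emeasure A E = emeasure N (limit_map -` E \<inter> C)" if "E \<in> sets borel" for E
    unfolding A_def using that C sets.sets_into_space[OF C] measurable_restrict_space1[OF limit_map_measurable]
    by (simp add: emeasure_distr emeasure_restrict_space space_restrict_space Int_absorb2 Int_assoc)
  have T_measure: "measure N (T l) = measure \<mu> (dyadic_cell s l)" for l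
    using T by (simp add: m_def)
  have "A = \<mu>"
  proof (rule finite_measure_eqI_open_le)
    show "finite_measure A"
      using emeasure_A[of UNIV] by (intro finite_measureI) (simp add: A_def)
    show "emeasure A UNIV = emeasure \<mu> UNIV" using emeasure_A[of UNIV] mass by simp
    fix G :: "'a set" assume "open G"
    then show "emeasure \<mu> G \<le> emeasure A G"
      using emeasure_open_le[OF fin \<open>finite_measure \<mu>\<close> sets_\<mu> T_measure] emeasure_A[of G]
      by (simp add: T_Nil)
  qed (simp_all add: A_def sets_\<mu> \<open>finite_measure \<mu>\<close>)
  then show ?thesis
    using limit_map_measurable emeasure_A by (intro bexI[of _ limit_map]) auto
qed

lemma nonatomic_exists_map_distr_pieces:
  fixes \<mu> :: "nat \<Rightarrow> 'a::polish_space measure"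
  assumes fin: "finite_measure N" and na: "nonatomic N"
    and C: "\<And>i. i \<le> n \<Longrightarrow> C i \<in> sets N" and disj: "disjoint_family_on C {..n}"
    and cover: "(\<Union>i\<le>n. C i) = space N"
    and "\<And>i. i \<le> n \<Longrightarrow> finite_measure (\<mu> i)" and "\<And>i. i \<le> n \<Longrightarrow> sets (\<mu> i) = sets borel"
    and "\<And>i. i \<le> n \<Longrightarrow> emeasure (\<mu> i) UNIV = emeasure N (C i)"
  shows "\<exists>\<psi>\<in>borel_measurable N. \<forall>i\<le>n. \<forall>E\<in>sets borel. emeasure N (\<psi> -` E \<inter> C i) = emeasure (\<mu> i) E"
proof -
  have "\<forall>i\<in>{..n}. \<exists>\<psi>\<in>borel_measurable N. \<forall>E\<in>sets borel. emeasure N (\<psi> -` E \<inter> C i) = emeasure (\<mu> i) E"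
    using nonatomic_exists_map_distr[OF fin na C] assms by blast
  then obtain \<Psi> where \<Psi>: "\<And>i. i \<le> n \<Longrightarrow> \<Psi> i \<in> borel_measurable N"
    "\<And>i E. i \<le> n \<Longrightarrow> E \<in> sets borel \<Longrightarrow> emeasure N (\<Psi> i -` E \<inter> C i) = emeasure (\<mu> i) E"
    by (metis atMost_iff)
  define \<psi> where "\<psi> p = \<Psi> (LEAST i. p \<in> C i) p" for p
  have \<psi>_eq: "\<psi> p = \<Psi> i p" if "i \<le> n" "p \<in> C i" for i p
  proof -
    have "(LEAST i. p \<in> C i) \<le> i" "p \<in> C (LEAST i. p \<in> C i)"
      using that(2) by (auto intro: Least_le LeastI)
    then have "(LEAST i. p \<in> C i) = i"
      using disj that unfolding disjoint_family_on_def by (meson atMost_iff disjoint_iff le_trans)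
    then show ?thesis by (simp add: \<psi>_def)
  qed
  have "\<psi> \<in> borel_measurable N"
  proof (rule measurable_piecewise_restrict2[where A = "\<lambda>i. if i \<le> n then C i else {}"])
    show "space N = (\<Union>i. if i \<le> n then C i else {})" using cover by auto
    show "\<exists>h\<in>borel_measurable N. \<forall>p\<in>if i \<le> n then C i else {}. \<psi> p = h p" for i
      using \<Psi>(1) \<psi>_eq by (cases "i \<le> n") auto
  qed (use C in auto)
  moreover have "\<psi> -` E \<inter> C i = \<Psi> i -` E \<inter> C i" if "i \<le> n" for i E
    using \<psi>_eq[OF that] by auto
  ultimately show ?thesis using \<Psi>(2) by (intro bexI[of _ \<psi>]) auto
qed

lemma nonatomic_exists_map_partition:
  fixes \<mu> :: "'a::polish_space measure" and \<kappa> :: "nat \<Rightarrow> 'a measure" and C :: "nat \<Rightarrow> 'b set"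
  assumes N: "prob_space N" "nonatomic N" and \<mu>: "prob_space \<mu>" "sets \<mu> = sets borel"
    and C: "\<And>j. j \<le> n \<Longrightarrow> C j \<in> sets N" and disj_C: "disjoint_family_on C {..n}"
    and cover: "(\<Union>j\<le>n. C j) = space N"
    and \<kappa>: "\<And>j. finite_measure (\<kappa> j) \<and> sets (\<kappa> j) = sets borel"
    and mass: "\<And>j. j < n \<Longrightarrow> emeasure (\<kappa> j) UNIV = emeasure N (C j)"
    and \<kappa>_sum: "\<And>E. E \<in> sets borel \<Longrightarrow> (\<Sum>j\<le>n. emeasure (\<kappa> j) E) = emeasure \<mu> E"
  obtains \<psi> where "\<psi> \<in> borel_measurable N" "distr N borel \<psi> = \<mu>"
    "\<forall>j\<le>n. \<forall>E\<in>sets borel. emeasure N (\<psi> -` E \<inter> C j) = emeasure (\<kappa> j) E"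
proof -
  interpret N: prob_space N by (rule N(1))
  interpret \<mu>: prob_space \<mu> by (rule \<mu>(1))
  have "(\<Sum>j<n. emeasure (\<kappa> j) UNIV) + emeasure (\<kappa> n) UNIV = (\<Sum>j<n. emeasure N (C j)) + emeasure N (C n)"
  proof -
    have "(\<Sum>j\<le>n. emeasure (\<kappa> j) UNIV) = emeasure N (\<Union>j\<le>n. C j)"
      using \<kappa>_sum[of UNIV] cover N.emeasure_space_1 \<mu>.emeasure_space_1 sets_eq_imp_space_eq[OF \<mu>(2)]
      by simp
    also have "\<dots> = (\<Sum>j\<le>n. emeasure N (C j))"
      using C disj_C by (intro sum_emeasure[symmetric]) auto
    finally show ?thesis by (simp add: lessThan_Suc_atMost[symmetric])
  qed
  moreover have "(\<Sum>j<n. emeasure (\<kappa> j) UNIV) = (\<Sum>j<n. emeasure N (C j))"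
    using mass by simp
  moreover have "(\<Sum>j<n. emeasure N (C j)) \<noteq> \<infinity>"
    by (simp add: N.emeasure_eq_measure)
  ultimately have "emeasure (\<kappa> n) UNIV = emeasure N (C n)"
    by (simp add: ennreal_add_left_cancel)
  with mass have "emeasure (\<kappa> j) UNIV = emeasure N (C j)" if "j \<le> n" for j
    using that by (cases "j = n") auto
  then have "\<exists>\<psi>\<in>borel_measurable N. \<forall>j\<le>n. \<forall>E\<in>sets borel. emeasure N (\<psi> -` E \<inter> C j) = emeasure (\<kappa> j) E"
    by (intro nonatomic_exists_map_distr_pieces[OF N.finite_measure_axioms N(2) C disj_C cover])
      (use \<kappa> in auto)
  then obtain \<psi> where \<psi>: "\<psi> \<in> borel_measurable N"
    and \<psi>_C: "\<And>j E. j \<le> n \<Longrightarrow> E \<in> sets borel \<Longrightarrow> emeasure N (\<psi> -` E \<inter> C j) = emeasure (\<kappa> j) E"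
    by blast
  have "distr N borel \<psi> = \<mu>"
    by (rule distr_eq_of_pieces[OF \<psi> C disj_C cover \<psi>_C \<kappa>_sum \<mu>(2)])
  with \<psi> show thesis
    by (rule that) (use \<psi>_C in blast)
qed

lemma nonatomic_coupling:
  fixes \<mu> :: "'a::polish_space measure" and B :: "nat \<Rightarrow> 'b set" and F :: "nat \<Rightarrow> 'a set"
  assumes N: "prob_space N" "nonatomic N" and \<mu>: "prob_space \<mu>" "sets \<mu> = sets borel"
    and B: "\<And>j. j < n \<Longrightarrow> B j \<in> sets N" and disj_B: "disjoint_family_on B {..<n}"
    and F: "\<And>j. j < n \<Longrightarrow> F j \<in> sets borel" and disj_F: "disjoint_family_on F {..<n}"
    and "0 \<le> a" and large: "\<And>j. j < n \<Longrightarrow> measure \<mu> (F j) \<le> measure N (B j) + a"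
  obtains \<psi> R where "\<psi> \<in> borel_measurable N" "distr N borel \<psi> = \<mu>" "R \<in> sets N"
    "measure N R \<le> 1 - (\<Sum>j<n. measure \<mu> (F j)) + n * a"
    "AE p in N. p \<notin> R \<longrightarrow> (\<exists>j<n. p \<in> B j \<and> \<psi> p \<in> F j)"
proof -
  interpret N: prob_space N by (rule N(1))
  define c where "c j = min (measure N (B j)) (measure \<mu> (F j))" for j
  obtain C where C: "\<And>j. j \<le> n \<Longrightarrow> C j \<in> sets N" and disj_C: "disjoint_family_on C {..n}"
    and cover: "(\<Union>j\<le>n. C j) = space N" and C_B: "\<And>j. j < n \<Longrightarrow> C j \<subseteq> B j \<and> measure N (C j) = c j"
    using nonatomic_partition_subsets[OF N B disj_B, of c] by (auto simp: c_def)
  have "\<exists>\<kappa>. (\<forall>j. finite_measure (\<kappa> j) \<and> sets (\<kappa> j) = sets borel)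
      \<and> (\<forall>j<n. emeasure (\<kappa> j) UNIV = c j \<and> emeasure (\<kappa> j) (- F j) = 0)
      \<and> (\<forall>E\<in>sets borel. (\<Sum>j\<le>n. emeasure (\<kappa> j) E) = emeasure \<mu> E)"
    using prob_space_decompose_disjoint[OF \<mu>(1), of n F c] F disj_F sets_eq_imp_space_eq[OF \<mu>(2)]
    by (simp add: c_def \<mu>(2) Compl_eq_Diff_UNIV)
  then obtain \<kappa> where \<kappa>: "\<And>j. finite_measure (\<kappa> j) \<and> sets (\<kappa> j) = sets borel"
    and \<kappa>_F: "\<And>j. j < n \<Longrightarrow> emeasure (\<kappa> j) UNIV = c j \<and> emeasure (\<kappa> j) (- F j) = 0"
    and \<kappa>_sum: "\<And>E. E \<in> sets borel \<Longrightarrow> (\<Sum>j\<le>n. emeasure (\<kappa> j) E) = emeasure \<mu> E"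
    by blast
  have mass: "emeasure (\<kappa> j) UNIV = emeasure N (C j)" if "j < n" for j
    using \<kappa>_F[OF that] C_B[OF that] by (simp add: N.emeasure_eq_measure)
  obtain \<psi> where \<psi>: "\<psi> \<in> borel_measurable N" and distr: "distr N borel \<psi> = \<mu>"
    and \<psi>_C: "\<forall>j\<le>n. \<forall>E\<in>sets borel. emeasure N (\<psi> -` E \<inter> C j) = emeasure (\<kappa> j) E"
    using N \<mu> C disj_C cover \<kappa> mass \<kappa>_sum by (rule nonatomic_exists_map_partition)
  have small: "measure N (C n) \<le> 1 - (\<Sum>j<n. measure \<mu> (F j)) + n * a"
  proof -
    have "(\<Sum>j\<le>n. measure N (C j)) = 1"
      using measure_finite_Union[of "{..n}" C N] C disj_C cover N.prob_space by auto
    then have "measure N (C n) = 1 - (\<Sum>j<n. c j)"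
      using C_B by (simp add: lessThan_Suc_atMost[symmetric])
    moreover have "(\<Sum>j<n. measure \<mu> (F j) - a) \<le> (\<Sum>j<n. c j)"
    proof (rule sum_mono)
      fix j assume "j \<in> {..<n}"
      then show "measure \<mu> (F j) - a \<le> c j" using large[of j] \<open>0 \<le> a\<close> by (simp add: c_def)
    qed
    ultimately show ?thesis by (simp add: sum_subtractf)
  qed
  have null: "emeasure N (\<psi> -` (- F j) \<inter> C j) = 0" if "j < n" for j
    using \<psi>_C[rule_format, of j "- F j"] \<kappa>_F[of j] F[OF that] that by simp
  have "AE p in N. \<forall>j<n. p \<in> C j \<longrightarrow> \<psi> p \<in> F j"
    using AE_in_pieces[OF \<psi> C[OF less_imp_le] F null] .
  with AE_space have "AE p in N. p \<notin> C n \<longrightarrow> (\<exists>j<n. p \<in> B j \<and> \<psi> p \<in> F j)"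
  proof eventually_elim
    case (elim p)
    then obtain j where j: "j \<le> n" "p \<in> C j" using cover by blast
    show ?case
    proof
      assume "p \<notin> C n"
      with j have "j < n" by (auto simp: le_less)
      with elim C_B j show "\<exists>j<n. p \<in> B j \<and> \<psi> p \<in> F j" by blast
    qed
  qed
  with \<psi> distr C[OF order_refl] small show thesis by (rule that)
qed

section \<open>Bump functions for separated compact sets\<close>

lemma exists_bump_function:
  fixes F :: "'a::metric_space set"
  assumes "0 < r"
  obtains f :: "'a \<Rightarrow> real" where "continuous_on UNIV f" "\<And>x. 0 \<le> f x \<and> f x \<le> 1" "\<And>x. x \<in> F \<Longrightarrow> f x = 1"
    "\<And>x. 0 < f x \<Longrightarrow> \<exists>y\<in>F. dist x y < r"
proof (cases "F = {}")
  case True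
  then show ?thesis by (intro that[of "\<lambda>_. 0"]) auto
next
  case False
  define f where "f x = max 0 (1 - infdist x F / r)" for x
  show ?thesis
  proof (rule that[of f])
    show "continuous_on UNIV f"
      unfolding f_def by (intro continuous_intros) (use \<open>0 < r\<close> in auto)
    show "0 \<le> f x \<and> f x \<le> 1" for x
      using infdist_nonneg[of x F] \<open>0 < r\<close> by (auto simp: f_def)
    show "f x = 1" if "x \<in> F" for x
      using that by (simp add: f_def)
    show "\<exists>y\<in>F. dist x y < r" if "0 < f x" for x
    proof -
      have "setdist {x} F < r"
        using that \<open>0 < r\<close> by (simp add: f_def infdist_eq_setdist less_max_iff_disj zero_less_divide_iff)
      then show ?thesis using False by (auto elim!: setdist_ltE)
    qed
  qed
qed

lemma disjoint_compacts_separated: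
  fixes F :: "nat \<Rightarrow> 'a::metric_space set"
  assumes compact: "\<And>j. j < n \<Longrightarrow> compact (F j)" and disj: "disjoint_family_on F {..<n}"
  obtains r where "0 < r"
    "\<And>i j x y. i < n \<Longrightarrow> j < n \<Longrightarrow> i \<noteq> j \<Longrightarrow> x \<in> F i \<Longrightarrow> y \<in> F j \<Longrightarrow> r \<le> dist x y"
proof -
  define P where "P = {(i, j). i < n \<and> j < n \<and> i \<noteq> j \<and> F i \<noteq> {} \<and> F j \<noteq> {}}"
  define r where "r = Min (insert 1 ((\<lambda>(i, j). setdist (F i) (F j)) ` P))"
  have "finite P"
    by (rule finite_subset[of _ "{..<n} \<times> {..<n}"]) (auto simp: P_def)
  have "0 < setdist (F i) (F j)" if "(i, j) \<in> P" for i j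
    using that compact disj compact_imp_closed
    by (subst setdist_gt_0_compact_closed) (auto simp: P_def disjoint_family_on_def)
  with \<open>finite P\<close> have "0 < r" by (auto simp: r_def)
  moreover have "r \<le> dist x y"
    if "i < n" "j < n" "i \<noteq> j" "x \<in> F i" "y \<in> F j" for i j x y
  proof -
    have "(i, j) \<in> P" using that by (auto simp: P_def)
    then have "r \<le> setdist (F i) (F j)"
      unfolding r_def using \<open>finite P\<close> by (intro Min_le) (auto intro: rev_image_eqI)
    also have "\<dots> \<le> dist x y" using that(4,5) by (rule setdist_le_dist)
    finally show ?thesis .
  qed
  ultimately show ?thesis by (rule that)
qed

lemma exists_disjoint_bump_functions:
  fixes F :: "nat \<Rightarrow> 'a::metric_space set"
  assumes "\<And>j. j < n \<Longrightarrow> compact (F j)" and "disjoint_family_on F {..<n}" and "0 < \<rho>"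
  obtains f :: "nat \<Rightarrow> 'a \<Rightarrow> real" and U :: "nat \<Rightarrow> 'a set" where
    "\<And>j. continuous_on UNIV (f j)" "\<And>j x. 0 \<le> f j x \<and> f j x \<le> 1"
    "\<And>j x. x \<in> F j \<Longrightarrow> f j x = 1" "\<And>j x. x \<notin> U j \<Longrightarrow> f j x = 0"
    "\<And>j. open (U j)" "disjoint_family_on U {..<n}" "\<And>j x. x \<in> U j \<Longrightarrow> \<exists>y\<in>F j. dist x y < \<rho>"
proof -
  obtain s where "0 < s"
    and sep: "\<And>i j x y. i < n \<Longrightarrow> j < n \<Longrightarrow> i \<noteq> j \<Longrightarrow> x \<in> F i \<Longrightarrow> y \<in> F j \<Longrightarrow> s \<le> dist x y"
    using disjoint_compacts_separated[OF assms(1,2)] by blast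
  define r where "r = min (s / 2) \<rho>"
  have "0 < r" using \<open>0 < s\<close> \<open>0 < \<rho>\<close> by (simp add: r_def)
  have "\<exists>g :: 'a \<Rightarrow> real. continuous_on UNIV g \<and> (\<forall>x. 0 \<le> g x \<and> g x \<le> 1) \<and> (\<forall>x\<in>F j. g x = 1)
          \<and> (\<forall>x. 0 < g x \<longrightarrow> (\<exists>y\<in>F j. dist x y < r))" for j
  proof -
    obtain g :: "'a \<Rightarrow> real" where g: "continuous_on UNIV g" "\<And>x. 0 \<le> g x \<and> g x \<le> 1"
      "\<And>x. x \<in> F j \<Longrightarrow> g x = 1" "\<And>x. 0 < g x \<Longrightarrow> \<exists>y\<in>F j. dist x y < r"
      using exists_bump_function[OF \<open>0 < r\<close>, of "F j"] by blast
    show ?thesis by (intro exI[of _ g] conjI allI ballI impI) (use g in auto)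
  qed
  then obtain f :: "nat \<Rightarrow> 'a \<Rightarrow> real" where f: "\<And>j. continuous_on UNIV (f j)" "\<And>j x. 0 \<le> f j x \<and> f j x \<le> 1"
    "\<And>j x. x \<in> F j \<Longrightarrow> f j x = 1" "\<And>j x. 0 < f j x \<Longrightarrow> \<exists>y\<in>F j. dist x y < r"
    by metis
  define U where "U j = (\<Union>y\<in>F j. ball y r)" for j
  show ?thesis
  proof (rule that[of f U])
    show "f j x = 0" if "x \<notin> U j" for j x
      using that f(2)[of j x] f(4)[of j x] by (force simp: U_def dist_commute)
    show "open (U j)" for j by (simp add: U_def open_UN)
    show "\<exists>y\<in>F j. dist x y < \<rho>" if "x \<in> U j" for j x
      using that by (force simp: U_def r_def dist_commute)
    show "disjoint_family_on U {..<n}"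
      unfolding disjoint_family_on_def
    proof (intro ballI impI equals0I)
      fix i j x assume "i \<in> {..<n}" "j \<in> {..<n}" "i \<noteq> j" "x \<in> U i \<inter> U j"
      then obtain y y' where "y \<in> F i" "y' \<in> F j" "dist y x < r" "dist y' x < r"
        by (auto simp: U_def)
      then have "dist y y' < s"
        using dist_triangle_less_add[of y x r y' r] by (simp add: dist_commute r_def)
      with sep[of i j y y'] \<open>i \<in> {..<n}\<close> \<open>j \<in> {..<n}\<close> \<open>i \<noteq> j\<close> \<open>y \<in> F i\<close> \<open>y' \<in> F j\<close>
      show False by simp
    qed
  qed (use f in auto)
qed

lemma exists_small_disjoint_compacts:
  fixes \<mu> :: "'a::polish_space measure"
  assumes "prob_space \<mu>" and sets_\<mu>: "sets \<mu> = sets borel" and "0 < d" and "0 < \<eta>"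
  obtains n :: nat and F :: "nat \<Rightarrow> 'a set" where "\<And>j. j < n \<Longrightarrow> compact (F j)"
    "\<And>j x y. x \<in> F j \<Longrightarrow> y \<in> F j \<Longrightarrow> dist x y < d"
    "disjoint_family_on F {..<n}" "1 - \<eta> < (\<Sum>j<n. measure \<mu> (F j))"
proof -
  interpret prob_space \<mu> by fact
  obtain s :: "nat \<Rightarrow> 'a" where dense: "dense_seq s" using dense_seq_exists by blast
  define D where "D = ball_partition s (d / 2)"
  have D_sets: "D j \<in> sets \<mu>" for j using ball_partition_borel sets_\<mu> by (simp add: D_def)
  have "(\<lambda>m. measure \<mu> (\<Union>j<m. D j)) \<longlonglongrightarrow> measure \<mu> (\<Union>m. \<Union>j<m. D j)"
    using D_sets by (intro finite_Lim_measure_incseq) (auto intro!: incseq_SucI simp: lessThan_Suc)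
  moreover have "(\<Union>m. \<Union>j<m. D j) = space \<mu>"
  proof -
    have "x \<in> (\<Union>m. \<Union>j<m. D j)" for x
      using ball_partition_cover[OF dense, of "d / 2" x] \<open>0 < d\<close> by (auto simp: D_def)
    then show ?thesis using sets_eq_imp_space_eq[OF sets_\<mu>] by auto
  qed
  ultimately have "(\<lambda>m. measure \<mu> (\<Union>j<m. D j)) \<longlonglongrightarrow> 1" by (simp add: prob_space)
  then have "eventually (\<lambda>m. 1 - \<eta> / 2 < measure \<mu> (\<Union>j<m. D j)) sequentially"
    using \<open>0 < \<eta>\<close> by (intro order_tendstoD(1)) auto
  then obtain n where n: "1 - \<eta> / 2 < measure \<mu> (\<Union>j<n. D j)"
    by (auto simp: eventually_sequentially)
  define a where "a = \<eta> / (2 * (n + 1))"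
  have "0 < a" using \<open>0 < \<eta>\<close> by (simp add: a_def)
  have "n * a \<le> \<eta> / 2"
    using \<open>0 < \<eta>\<close> by (simp add: a_def field_simps)
  have "\<forall>j. \<exists>K. K \<subseteq> D j \<and> compact K \<and> measure \<mu> (D j) \<le> measure \<mu> K + a"
    using finite_measure_inner_compact[OF finite_measure_axioms sets_\<mu> _ \<open>0 < a\<close>] D_sets sets_\<mu> by auto
  then obtain F where F: "\<And>j. F j \<subseteq> D j \<and> compact (F j) \<and> measure \<mu> (D j) \<le> measure \<mu> (F j) + a"
    by metis
  have disj_D: "disjoint_family D" unfolding D_def by (rule disjoint_family_ball_partition)
  have "measure \<mu> (\<Union>j<n. D j) = (\<Sum>j<n. measure \<mu> (D j))"
    using D_sets disj_D by (intro measure_finite_Union) (auto simp: disjoint_family_on_def)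
  also have "\<dots> \<le> (\<Sum>j<n. measure \<mu> (F j) + a)"
    using F by (intro sum_mono) auto
  finally have mass: "1 - \<eta> < (\<Sum>j<n. measure \<mu> (F j))"
    using n \<open>n * a \<le> \<eta> / 2\<close> by (simp add: sum.distrib)
  have small: "dist x y < d" if "x \<in> F j" "y \<in> F j" for j x y
  proof -
    have "x \<in> ball (s j) (d / 2)" "y \<in> ball (s j) (d / 2)"
      using that F[of j] ball_partition_subset_ball[of s "d / 2" j] by (auto simp: D_def)
    then show ?thesis by (metis dist_triangle_half_r mem_ball)
  qed
  have disj_F: "disjoint_family_on F {..<n}"
    using disj_D F unfolding disjoint_family_on_def by blast
  show ?thesis
    by (rule that[of n F]) (use F small disj_F mass in auto)
qed

section \<open>Weak* neighbourhoods\<close>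

lemma openin_weak_star_integral_gt:
  fixes f :: "nat \<Rightarrow> 'a::topological_space \<Rightarrow> real"
  assumes "\<And>j. continuous_on UNIV (f j)" and "\<And>j. bounded (range (f j))"
  shows "openin weak_star_topology (Prob \<inter> (\<Inter>j<n. {\<nu>\<in>Prob. c j < (\<integral>x. f j x \<partial>\<nu>)}))"
proof -
  define S where "S = {{N \<in> (Prob :: 'a measure set). (\<integral>x. g x \<partial>N) \<in> U} | g U.
        continuous_on UNIV (g :: 'a \<Rightarrow> real) \<and> bounded (range g) \<and> open U}"
  have "Prob \<in> S"
    unfolding S_def by (intro CollectI exI[of _ "\<lambda>_. 0"] exI[of _ UNIV]) auto
  moreover have X: "{\<nu>\<in>Prob. c j < (\<integral>x. f j x \<partial>\<nu>)} \<in> S" for j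
    unfolding S_def using assms by (intro CollectI exI[of _ "f j"] exI[of _ "{c j<..}"]) auto
  ultimately have "generate_topology_on S (Prob \<inter> (\<Inter>j<n. {\<nu>\<in>Prob. c j < (\<integral>x. f j x \<partial>\<nu>)}))"
  proof (induction n)
    case (Suc m)
    have "Prob \<inter> (\<Inter>j<Suc m. {\<nu>\<in>Prob. c j < (\<integral>x. f j x \<partial>\<nu>)}) =
        (Prob \<inter> (\<Inter>j<m. {\<nu>\<in>Prob. c j < (\<integral>x. f j x \<partial>\<nu>)})) \<inter> {\<nu>\<in>Prob. c m < (\<integral>x. f m x \<partial>\<nu>)}"
      by (auto simp: lessThan_Suc)
    with Suc X[of m] show ?case by (simp add: generate_topology_on.Int generate_topology_on.Basis)
  qed (simp add: generate_topology_on.Basis)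
  then show ?thesis
    unfolding weak_star_topology_def S_def openin_topology_generated_by_iff by simp
qed

lemma measure_le_of_integral_bump:
  assumes "prob_space \<mu>" "sets \<mu> = sets borel" "prob_space \<nu>" "sets \<nu> = sets borel"
    and F: "F \<in> sets borel" and U: "U \<in> sets borel" and f: "f \<in> borel_measurable borel"
    and f_bounds: "\<And>x. 0 \<le> f x \<and> f x \<le> 1"
    and f_F: "\<And>x. x \<in> F \<Longrightarrow> f x = 1" and f_U: "\<And>x. x \<notin> U \<Longrightarrow> f x = 0"
    and close: "(\<integral>x. f x \<partial>\<mu>) - a < (\<integral>x. f x \<partial>\<nu>)"
  shows "measure \<mu> F \<le> measure \<nu> U + a"
proof -
  interpret \<mu>: prob_space \<mu> by fact
  interpret \<nu>: prob_space \<nu> by fact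
  have "measure \<mu> F \<le> (\<integral>x. f x \<partial>\<mu>)"
    using assms f_bounds f_F
    by (intro measure_le_integral \<mu>.integrable_const_bound[of _ 1]) (auto simp: indicator_def)
  moreover have "(\<integral>x. f x \<partial>\<nu>) \<le> measure \<nu> U"
    using assms f_bounds f_U
    by (intro integral_le_measure \<nu>.integrable_const_bound[of _ 1]) (auto simp: indicator_def)
  ultimately show ?thesis using close by linarith
qed

lemma nonatomic_transport_near:
  fixes \<mu> :: "'a::polish_space measure" and \<phi> :: "'b \<Rightarrow> 'a" and F U :: "nat \<Rightarrow> 'a set"
  assumes N: "prob_space N" "nonatomic N" and \<mu>: "prob_space \<mu>" "sets \<mu> = sets borel"
    and \<phi>: "\<phi> \<in> borel_measurable N"
    and F: "\<And>j. j < n \<Longrightarrow> F j \<in> sets borel" "disjoint_family_on F {..<n}"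
    and F_small: "\<And>j x y. x \<in> F j \<Longrightarrow> y \<in> F j \<Longrightarrow> dist x y < d"
    and U: "\<And>j. j < n \<Longrightarrow> U j \<in> sets borel" "disjoint_family_on U {..<n}"
    and U_near: "\<And>j x. x \<in> U j \<Longrightarrow> \<exists>y\<in>F j. dist x y < r"
    and "0 \<le> a" and large: "\<And>j. j < n \<Longrightarrow> measure \<mu> (F j) \<le> measure (distr N borel \<phi>) (U j) + a"
  obtains \<psi> R where "\<psi> \<in> borel_measurable N" "distr N borel \<psi> = \<mu>" "R \<in> sets N"
    "measure N R \<le> 1 - (\<Sum>j<n. measure \<mu> (F j)) + n * a"
    "AE p in N. p \<notin> R \<longrightarrow> dist (\<phi> p) (\<psi> p) < r + d"
proof -
  define B where "B j = \<phi> -` U j \<inter> space N" for j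
  have B: "B j \<in> sets N" if "j < n" for j
    using measurable_sets[OF \<phi> U(1)[OF that]] by (simp add: B_def)
  have disj_B: "disjoint_family_on B {..<n}"
    using U(2) unfolding disjoint_family_on_def B_def by blast
  have large_B: "measure \<mu> (F j) \<le> measure N (B j) + a" if "j < n" for j
    using large[OF that] measure_distr[OF \<phi> U(1)[OF that]] by (simp add: B_def)
  obtain \<psi> R where \<psi>: "\<psi> \<in> borel_measurable N" "distr N borel \<psi> = \<mu>"
    and R: "R \<in> sets N" "measure N R \<le> 1 - (\<Sum>j<n. measure \<mu> (F j)) + n * a"
    and coupled: "AE p in N. p \<notin> R \<longrightarrow> (\<exists>j<n. p \<in> B j \<and> \<psi> p \<in> F j)"
    using N \<mu> B disj_B F \<open>0 \<le> a\<close> large_B by (rule nonatomic_coupling)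
  have "AE p in N. p \<notin> R \<longrightarrow> dist (\<phi> p) (\<psi> p) < r + d"
    using coupled
  proof eventually_elim
    case (elim p)
    show ?case
    proof
      assume "p \<notin> R"
      with elim obtain j where "\<phi> p \<in> U j" "\<psi> p \<in> F j" by (auto simp: B_def)
      then obtain y where "y \<in> F j" "dist (\<phi> p) y < r" using U_near by blast
      with F_small[OF \<open>\<psi> p \<in> F j\<close> \<open>y \<in> F j\<close>] show "dist (\<phi> p) (\<psi> p) < r + d"
        using dist_triangle_less_add[of "\<phi> p" y r "\<psi> p" d] by simp
    qed
  qed
  with \<psi> R show thesis by (rule that)
qed

lemma weak_star_nbhd_transport:
  fixes \<mu> :: "'a::polish_space measure"
  assumes "\<mu> \<in> Prob" and "0 < \<delta>" and "0 < \<eta>"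
  obtains \<O> where "openin weak_star_topology \<O>" "\<mu> \<in> \<O>"
    "\<And>(N :: 'b measure) \<phi>. prob_space N \<Longrightarrow> nonatomic N \<Longrightarrow> \<phi> \<in> borel_measurable N \<Longrightarrow>
       distr N borel \<phi> \<in> \<O> \<Longrightarrow> \<exists>\<psi>\<in>borel_measurable N. distr N borel \<psi> = \<mu> \<and>
         (\<exists>R\<in>sets N. measure N R < \<eta> \<and> (AE p in N. p \<notin> R \<longrightarrow> dist (\<phi> p) (\<psi> p) < \<delta>))"
proof -
  have \<mu>: "prob_space \<mu>" "sets \<mu> = sets borel" using assms(1) by (auto simp: Prob_def)
  have "0 < \<delta> / 2" "0 < \<eta> / 2" using assms(2,3) by simp_all
  obtain n :: nat and F :: "nat \<Rightarrow> 'a set" where F_compact: "\<And>j. j < n \<Longrightarrow> compact (F j)"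
    and F_small: "\<And>j x y. x \<in> F j \<Longrightarrow> y \<in> F j \<Longrightarrow> dist x y < \<delta> / 2"
    and disj_F: "disjoint_family_on F {..<n}" and mass: "1 - \<eta> / 2 < (\<Sum>j<n. measure \<mu> (F j))"
    using exists_small_disjoint_compacts[OF \<mu> \<open>0 < \<delta> / 2\<close> \<open>0 < \<eta> / 2\<close>] by blast
  obtain f :: "nat \<Rightarrow> 'a \<Rightarrow> real" and U :: "nat \<Rightarrow> 'a set" where f_cont: "\<And>j. continuous_on UNIV (f j)" and f_bounds: "\<And>j x. 0 \<le> f j x \<and> f j x \<le> 1"
    and f_F: "\<And>j x. x \<in> F j \<Longrightarrow> f j x = 1" and f_U: "\<And>j x. x \<notin> U j \<Longrightarrow> f j x = 0"
    and U_open: "\<And>j. open (U j)" and disj_U: "disjoint_family_on U {..<n}"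
    and U_near: "\<And>j x. x \<in> U j \<Longrightarrow> \<exists>y\<in>F j. dist x y < \<delta> / 2"
    using exists_disjoint_bump_functions[OF F_compact disj_F \<open>0 < \<delta> / 2\<close>] by blast
  define a where "a = \<eta> / (2 * (n + 1))"
  have "0 < a" and "n * a \<le> \<eta> / 2"
    using assms(3) by (simp_all add: a_def field_simps)
  define \<O> where "\<O> = Prob \<inter> (\<Inter>j<n. {\<nu>\<in>Prob. (\<integral>x. f j x \<partial>\<mu>) - a < (\<integral>x. f j x \<partial>\<nu>)})"
  have f_bounded: "bounded (range (f j))" for j
    by (rule bounded_subset[of "{0..1}"]) (use f_bounds in auto)
  show ?thesis
  proof (rule that[of \<O>])
    show "openin weak_star_topology \<O>"
      unfolding \<O>_def by (rule openin_weak_star_integral_gt[OF f_cont f_bounded])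
    show "\<mu> \<in> \<O>" using assms(1) \<open>0 < a\<close> by (simp add: \<O>_def)
    fix N :: "'b measure" and \<phi>
    assume N: "prob_space N" "nonatomic N" and \<phi>: "\<phi> \<in> borel_measurable N"
      and close: "distr N borel \<phi> \<in> \<O>"
    have \<nu>: "prob_space (distr N borel \<phi>)" "sets (distr N borel \<phi>) = sets borel"
      using close by (auto simp: \<O>_def Prob_def)
    have F_sets: "F j \<in> sets borel" if "j < n" for j
      using F_compact[OF that] by (simp add: compact_imp_closed)
    have U_sets: "U j \<in> sets borel" for j
      using U_open by simp
    have large: "measure \<mu> (F j) \<le> measure (distr N borel \<phi>) (U j) + a" if "j < n" for j
      by (rule measure_le_of_integral_bump[OF \<mu> \<nu> F_sets[OF that] U_sets
            borel_measurable_continuous_onI[OF f_cont] f_bounds f_F f_U])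
        (use close that in \<open>auto simp: \<O>_def\<close>)
    obtain \<psi> R where "\<psi> \<in> borel_measurable N" "distr N borel \<psi> = \<mu>" "R \<in> sets N"
      and R: "measure N R \<le> 1 - (\<Sum>j<n. measure \<mu> (F j)) + n * a"
      and AE: "AE p in N. p \<notin> R \<longrightarrow> dist (\<phi> p) (\<psi> p) < \<delta> / 2 + \<delta> / 2"
      using N \<mu> \<phi> F_sets disj_F F_small U_sets disj_U U_near less_imp_le[OF \<open>0 < a\<close>] large
      by (rule nonatomic_transport_near)
    moreover have "measure N R < \<eta>" using R mass \<open>n * a \<le> \<eta> / 2\<close> by linarith
    moreover have "AE p in N. p \<notin> R \<longrightarrow> dist (\<phi> p) (\<psi> p) < \<delta>" using AE by simp
    ultimately show "\<exists>\<psi>\<in>borel_measurable N. distr N borel \<psi> = \<mu> \<and>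
        (\<exists>R\<in>sets N. measure N R < \<eta> \<and> (AE p in N. p \<notin> R \<longrightarrow> dist (\<phi> p) (\<psi> p) < \<delta>))"
      by blast
  qed
qed

lemma rhoM_le_off_set:
  fixes \<rho> :: "'a::metric_space \<Rightarrow> 'a \<Rightarrow> real" and \<phi> \<psi> :: "'b \<Rightarrow> 'a"
  assumes "prob_space (volbar M)" and "one_bounded \<rho>" and R: "R \<in> sets (volbar M)"
    and close: "\<And>x y. dist x y < \<delta> \<Longrightarrow> \<rho> x y < e"
    and near: "AE p in volbar M. p \<notin> R \<longrightarrow> dist (\<phi> p) (\<psi> p) < \<delta>" and "0 \<le> e"
  shows "rhoM \<rho> M \<phi> \<psi> \<le> e + measure (volbar M) R"
  unfolding rhoM_def
proof (rule integral_le_off_set[OF assms(1) R])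
  show "\<rho> (\<phi> p) (\<psi> p) \<le> 1" for p
    using \<open>one_bounded \<rho>\<close> by (simp add: one_bounded_def)
  show "AE p in volbar M. p \<notin> R \<longrightarrow> \<rho> (\<phi> p) (\<psi> p) \<le> e"
    using near by eventually_elim (auto dest: close intro: less_imp_le)
qed fact

theorem lemma6p9:
  fixes \<mu> :: "'a::polish_space measure" and \<rho> :: "'a \<Rightarrow> 'a \<Rightarrow> real"
    and M :: "'b measure" and \<epsilon> :: real
  assumes "\<mu> \<in> Prob"
    and "is_metric \<rho>" and "one_bounded \<rho>" and "unif_cont_metric \<rho>"
    and "finite_measure M" and "nonatomic M" and "emeasure M (space M) \<noteq> 0"
    and "\<epsilon> > 0"
  shows "\<exists>\<O>. openin weak_star_topology \<O> \<and> \<mu> \<in> \<O> \<and>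
           (\<forall>\<phi> \<in> M \<rightarrow>\<^sub>M borel. distr (volbar M) borel \<phi> \<in> \<O> \<longrightarrow>
              (\<exists>\<psi> \<in> M \<rightarrow>\<^sub>M borel. rhoM \<rho> M \<phi> \<psi> < \<epsilon> \<and> distr (volbar M) borel \<psi> = \<mu>))"
proof -
  have N: "prob_space (volbar M)" "nonatomic (volbar M)"
    using assms(5-7) by (simp_all add: prob_space_volbar nonatomic_volbar)
  have "\<exists>\<delta>>0. \<forall>x y. dist x y < \<delta> \<longrightarrow> \<rho> x y < \<epsilon> / 2"
    using \<open>unif_cont_metric \<rho>\<close> unfolding unif_cont_metric_def
    by (elim allE[of _ "\<epsilon> / 2"]) (use \<open>\<epsilon> > 0\<close> in simp)
  then obtain \<delta> where "0 < \<delta>" and \<delta>: "\<And>x y. dist x y < \<delta> \<Longrightarrow> \<rho> x y < \<epsilon> / 2"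
    by blast
  show ?thesis
  proof (rule weak_star_nbhd_transport[OF \<open>\<mu> \<in> Prob\<close> \<open>0 < \<delta>\<close> half_gt_zero[OF \<open>\<epsilon> > 0\<close>]])
    fix \<O> assume \<O>: "openin weak_star_topology \<O>" "\<mu> \<in> \<O>" and transport:
      "\<And>(N :: 'b measure) \<phi>. prob_space N \<Longrightarrow> nonatomic N \<Longrightarrow> \<phi> \<in> borel_measurable N \<Longrightarrow>
         distr N borel \<phi> \<in> \<O> \<Longrightarrow> \<exists>\<psi>\<in>borel_measurable N. distr N borel \<psi> = \<mu> \<and>
           (\<exists>R\<in>sets N. measure N R < \<epsilon> / 2 \<and> (AE p in N. p \<notin> R \<longrightarrow> dist (\<phi> p) (\<psi> p) < \<delta>))"
    have "\<exists>\<psi>\<in>M \<rightarrow>\<^sub>M borel. rhoM \<rho> M \<phi> \<psi> < \<epsilon> \<and> distr (volbar M) borel \<psi> = \<mu>"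
      if "\<phi> \<in> M \<rightarrow>\<^sub>M borel" and close: "distr (volbar M) borel \<phi> \<in> \<O>" for \<phi>
    proof -
      have "\<phi> \<in> borel_measurable (volbar M)"
        using that(1) by (simp add: measurable_cong_sets[OF sets_volbar refl])
      from transport[OF N this close] obtain \<psi> R where \<psi>: "\<psi> \<in> borel_measurable (volbar M)"
        "distr (volbar M) borel \<psi> = \<mu>" and R: "R \<in> sets (volbar M)" "measure (volbar M) R < \<epsilon> / 2"
        and near: "AE p in volbar M. p \<notin> R \<longrightarrow> dist (\<phi> p) (\<psi> p) < \<delta>"
        by blast
      have "rhoM \<rho> M \<phi> \<psi> < \<epsilon>"
        using rhoM_le_off_set[OF N(1) \<open>one_bounded \<rho>\<close> R(1) \<delta> near] R(2) \<open>\<epsilon> > 0\<close> by simp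
      moreover have "\<psi> \<in> M \<rightarrow>\<^sub>M borel"
        using \<psi>(1) by (simp add: measurable_cong_sets[OF sets_volbar refl])
      ultimately show ?thesis using \<psi>(2) by blast
    qed
    then show ?thesis using \<O> by blast
  qed
qed

end
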